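(* Let $x:M^n\to\mathbb{R}^{n+1}$ be a locally strongly convex centroaffine hypersurface, and suppose there is a non-constant smooth function $\mu$ on $M^n$ such that $(\hat\nabla_ZK)(X,Y)=\mu\big(h(X,Y)Z+h(X,Z)Y+h(Y,Z)X\big)$ for all tangent vectors $X,Y,Z$ at every point. Let $p\in M^n$ be a point with $d\mu_p\ne0$, and let $\{e_1,\dots,e_n\}$ be an $h$-orthonormal basis of $T_pM^n$ such that $e_1$ maximizes $f(u)=h(K_uu,u)$ over the $h$-unit vectors $u\in T_pM^n$, $K_{e_1}e_i=\lambda_ie_i$ for all $i$, and $\lambda_1\ge2\lambda_i$ for $i\ge2$ (with $f(e_i)=0$ if $\lambda_1=2\lambda_i$). Then the number of distinct eigenvalues of $K_{e_1}$ is at most $3$, so that it equals $2$ or $3$.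
   Context: A centroaffine hypersurface is an immersion $x:M^n\to\mathbb{R}^{n+1}$ whose position vector is everywhere transversal to the tangent space; with $D$ the flat connection of $\mathbb{R}^{n+1}$, $D_Xx_*(Y)=x_*(\nabla_XY)+h(X,Y)(-\varepsilon x)$, $\varepsilon=\pm1$, defines the induced connection $\nabla$ and centroaffine metric $h$. Locally strongly convex means $h$ definite, and $\varepsilon$ is chosen so that $h$ is positive definite. $\hat\nabla$ is the Levi-Civita connection of $h$ and $K_XY=\nabla_XY-\hat\nabla_XY$ the difference tensor. *)

theory Defs
  imports "HOL-Analysis.Analysis"
begin

text \<open>Local (coordinate-chart) model of a centroaffine hypersurface:
  M is an open set U of real^'n, x : U -> real^'m with CARD('m) = CARD('n) + 1.
  Tangent vectors at u are identified with vectors of real^'n (constant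
  coordinate vector fields), x_* = frechet derivative of x.\<close>

fun iter_dd :: "('a::real_normed_vector \<Rightarrow> 'b::real_normed_vector) \<Rightarrow> 'a list \<Rightarrow> 'a \<Rightarrow> 'b" where
  "iter_dd f [] = f"
| "iter_dd f (v # vs) = (\<lambda>u. frechet_derivative (iter_dd f vs) (at u) v)"

definition smooth_on :: "'a::real_normed_vector set \<Rightarrow> ('a \<Rightarrow> 'b::real_normed_vector) \<Rightarrow> bool" where
  "smooth_on U f \<longleftrightarrow> (\<forall>vs. \<forall>u\<in>U. iter_dd f vs differentiable (at u))"

definition dx :: "(real^'n \<Rightarrow> real^'m) \<Rightarrow> real^'n \<Rightarrow> real^'n \<Rightarrow> real^'m" where
  "dx x u Y = frechet_derivative x (at u) Y"

definition ddx :: "(real^'n \<Rightarrow> real^'m) \<Rightarrow> real^'n \<Rightarrow> real^'n \<Rightarrow> real^'n \<Rightarrow> real^'m" where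
  "ddx x u X Y = frechet_derivative (\<lambda>w. dx x w Y) (at u) X"

definition centroaffine_immersion :: "(real^'n) set \<Rightarrow> (real^'n \<Rightarrow> real^'m) \<Rightarrow> bool" where
  "centroaffine_immersion U x \<longleftrightarrow> open U \<and> smooth_on U x \<and>
     (\<forall>u\<in>U. inj (dx x u) \<and> x u \<notin> range (dx x u))"

text \<open>Gauss formula  D_X x_*(Y) = x_*(nabla_X Y) + h(X,Y) (-eps x).\<close>
definition ca_h :: "real \<Rightarrow> (real^'n \<Rightarrow> real^'m) \<Rightarrow> real^'n \<Rightarrow> real^'n \<Rightarrow> real^'n \<Rightarrow> real" where
  "ca_h eps x u X Y = (THE c. \<exists>t. ddx x u X Y = dx x u t + c *\<^sub>R ((- eps) *\<^sub>R x u))"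

definition ca_nabla :: "real \<Rightarrow> (real^'n \<Rightarrow> real^'m) \<Rightarrow> real^'n \<Rightarrow> real^'n \<Rightarrow> real^'n \<Rightarrow> real^'n" where
  "ca_nabla eps x u X Y = (THE t. \<exists>c. ddx x u X Y = dx x u t + c *\<^sub>R ((- eps) *\<^sub>R x u))"

definition ca_dh :: "real \<Rightarrow> (real^'n \<Rightarrow> real^'m) \<Rightarrow> real^'n \<Rightarrow> real^'n \<Rightarrow> real^'n \<Rightarrow> real^'n \<Rightarrow> real" where
  "ca_dh eps x u Z X Y = frechet_derivative (\<lambda>w. ca_h eps x w X Y) (at u) Z"

text \<open>Levi-Civita connection of h (Koszul formula for coordinate fields).\<close>
definition ca_LC :: "real \<Rightarrow> (real^'n \<Rightarrow> real^'m) \<Rightarrow> real^'n \<Rightarrow> real^'n \<Rightarrow> real^'n \<Rightarrow> real^'n" where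
  "ca_LC eps x u X Y = (THE t. \<forall>Z. ca_h eps x u t Z =
      (ca_dh eps x u X Y Z + ca_dh eps x u Y X Z - ca_dh eps x u Z X Y) / 2)"

definition ca_K :: "real \<Rightarrow> (real^'n \<Rightarrow> real^'m) \<Rightarrow> real^'n \<Rightarrow> real^'n \<Rightarrow> real^'n \<Rightarrow> real^'n" where
  "ca_K eps x u X Y = ca_nabla eps x u X Y - ca_LC eps x u X Y"

definition ca_covK :: "real \<Rightarrow> (real^'n \<Rightarrow> real^'m) \<Rightarrow> real^'n \<Rightarrow> real^'n \<Rightarrow> real^'n \<Rightarrow> real^'n \<Rightarrow> real^'n" where
  "ca_covK eps x u Z X Y =
     frechet_derivative (\<lambda>w. ca_K eps x w X Y) (at u) Z
     + ca_LC eps x u Z (ca_K eps x u X Y)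
     - ca_K eps x u (ca_LC eps x u Z X) Y
     - ca_K eps x u X (ca_LC eps x u Z Y)"

definition loc_strongly_convex :: "real \<Rightarrow> (real^'n) set \<Rightarrow> (real^'n \<Rightarrow> real^'m) \<Rightarrow> bool" where
  "loc_strongly_convex eps U x \<longleftrightarrow> (eps = 1 \<or> eps = -1) \<and>
     (\<forall>u\<in>U. \<forall>X. X \<noteq> 0 \<longrightarrow> ca_h eps x u X X > 0)"

end

theory Submission
  imports Defs
begin

text \<open>Let \<open>D\<close> be the Levi-Civita connection of \<open>h\<close>, \<open>R\<close> its curvature and
  \<open>S(X,Y,Z) = h(X,Y)Z + h(X,Z)Y + h(Y,Z)X\<close>, so that the hypothesis reads \<open>DK = \<mu> S\<close>.
  Since \<open>Dh = 0\<close>, differentiating once more turns the Ricci identity into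
  \<open>d\<mu>(W) S(X,Y,Z) - d\<mu>(Z) S(X,Y,W) = (R(W,Z)\<cdot>K)(X,Y)\<close>, while the Gauss equation of a
  centroaffine hypersurface gives \<open>R(W,Z)V = \<epsilon>(h(Z,V)W - h(W,V)Z) - [K\<^sub>W,K\<^sub>Z]V\<close>.
  Taking \<open>W = e\<^sub>i\<close> and \<open>Z = X = Y = e\<^sub>1\<close> for \<open>i \<noteq> 1\<close> yields \<open>d\<mu>(e\<^sub>i) = 0\<close> and
  \<open>(\<lambda>\<^sub>i\<^sup>2 - \<lambda>\<^sub>1\<lambda>\<^sub>i + \<epsilon>)(\<lambda>\<^sub>1 - 2\<lambda>\<^sub>i) = -d\<mu>(e\<^sub>1)\<close>. As \<open>d\<mu>\<^sub>p \<noteq> 0\<close>, this forces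
  \<open>d\<mu>(e\<^sub>1) \<noteq> 0\<close>, hence \<open>\<lambda>\<^sub>1 > 2\<lambda>\<^sub>i\<close>, and all \<open>\<lambda>\<^sub>i\<close> with \<open>i \<noteq> 1\<close> are roots of one
  cubic. Three distinct roots of that cubic sum to \<open>3\<lambda>\<^sub>1/2\<close>, so at most two of them lie
  below \<open>\<lambda>\<^sub>1/2\<close>.\<close>

section \<open>An algebra of smooth functions closed under differentiation\<close>

lemma has_derivative_vec_nth:
  assumes "(F has_derivative F') (at u)"
  shows "((\<lambda>w. F w $ k) has_derivative (\<lambda>v. F' v $ k)) (at u)"
  using bounded_linear.has_derivative[OF bounded_linear_vec_nth assms] .

lemma has_derivative_vec_componentwise:
  fixes F :: "'a::real_normed_vector \<Rightarrow> real^'k"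
  assumes "\<And>k. ((\<lambda>w. F w $ k) has_derivative (\<lambda>v. F' v $ k)) (at u)"
  shows "(F has_derivative F') (at u)"
proof (subst has_derivative_componentwise_within, intro ballI)
  fix i :: "real^'k" assume "i \<in> Basis"
  then obtain k where i: "i = axis k 1" unfolding Basis_vec_def by auto
  have "\<And>y::real^'k. y \<bullet> i = y $ k" unfolding i by (simp add: inner_axis)
  then show "((\<lambda>x. F x \<bullet> i) has_derivative (\<lambda>x. F' x \<bullet> i)) (at u)"
    using assms[of k] by simp
qed

text \<open>Instead of developing \<open>C\<^sup>\<infinity>\<close> calculus, we only use the functions
  built from coordinates of iterated derivatives of \<open>x\<close> by ring operations,
  inversion of functions without zeros on \<open>U\<close>, and modification off \<open>U\<close>.
  This algebra contains all the geometric quantities of the hypersurface and is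
  closed under directional derivatives.\<close>

inductive_set smooth_alg :: "(real^'n) set \<Rightarrow> (real^'n \<Rightarrow> real^'m) \<Rightarrow> (real^'n \<Rightarrow> real) set"
  for U x where
  coord: "(\<lambda>u. iter_dd x vs u $ k) \<in> smooth_alg U x"
| const: "(\<lambda>u. c) \<in> smooth_alg U x"
| add: "f \<in> smooth_alg U x \<Longrightarrow> g \<in> smooth_alg U x \<Longrightarrow> (\<lambda>u. f u + g u) \<in> smooth_alg U x"
| mult: "f \<in> smooth_alg U x \<Longrightarrow> g \<in> smooth_alg U x \<Longrightarrow> (\<lambda>u. f u * g u) \<in> smooth_alg U x"
| inverse: "f \<in> smooth_alg U x \<Longrightarrow> \<forall>u\<in>U. f u \<noteq> 0 \<Longrightarrow> (\<lambda>u. inverse (f u)) \<in> smooth_alg U x"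
| cong: "f \<in> smooth_alg U x \<Longrightarrow> \<forall>u\<in>U. g u = f u \<Longrightarrow> g \<in> smooth_alg U x"

lemma frechet_derivative_add_at:
  assumes "f differentiable at u" "g differentiable at u"
  shows "frechet_derivative (\<lambda>w. f w + g w) (at u) v =
    frechet_derivative f (at u) v + frechet_derivative g (at u) v"
proof -
  have "((\<lambda>w. f w + g w) has_derivative
      (\<lambda>v. frechet_derivative f (at u) v + frechet_derivative g (at u) v)) (at u)"
    using assms unfolding frechet_derivative_works by (rule has_derivative_add)
  from fun_cong[OF frechet_derivative_at[OF this], of v] show ?thesis by simp
qed

lemma frechet_derivative_mult_at:
  fixes f g :: "'a::real_normed_vector \<Rightarrow> real"
  assumes "f differentiable at u" "g differentiable at u"
  shows "frechet_derivative (\<lambda>w. f w * g w) (at u) v =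
    f u * frechet_derivative g (at u) v + frechet_derivative f (at u) v * g u"
proof -
  have "((\<lambda>w. f w * g w) has_derivative
      (\<lambda>v. f u * frechet_derivative g (at u) v + frechet_derivative f (at u) v * g u)) (at u)"
    using assms unfolding frechet_derivative_works by (rule has_derivative_mult)
  from fun_cong[OF frechet_derivative_at[OF this], of v] show ?thesis by simp
qed

lemma frechet_derivative_inverse_at:
  fixes f :: "'a::real_normed_vector \<Rightarrow> real"
  assumes "f differentiable at u" "f u \<noteq> 0"
  shows "frechet_derivative (\<lambda>w. inverse (f w)) (at u) v =
    - (inverse (f u) * frechet_derivative f (at u) v * inverse (f u))"
proof -
  have "((\<lambda>w. inverse (f w)) has_derivative
      (\<lambda>v. - (inverse (f u) * frechet_derivative f (at u) v * inverse (f u)))) (at u)"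
    using Deriv.has_derivative_inverse[of f, OF assms(2)] assms(1)
    unfolding frechet_derivative_works by blast
  from fun_cong[OF frechet_derivative_at[OF this], of v] show ?thesis by simp
qed

lemma smooth_alg_closed_derivative:
  assumes U: "open U" and x: "smooth_on U x" and f: "f \<in> smooth_alg U x"
  shows "(\<forall>u\<in>U. f differentiable at u) \<and>
         (\<forall>v. (\<lambda>u. frechet_derivative f (at u) v) \<in> smooth_alg U x)"
  using f
proof induction
  case (coord vs k)
  have d: "((\<lambda>u. iter_dd x vs u $ k) has_derivative (\<lambda>v. iter_dd x (v # vs) u $ k)) (at u)"
    if "u \<in> U" for u
    using has_derivative_vec_nth[of "iter_dd x vs"] x that
    unfolding smooth_on_def frechet_derivative_works by simp
  have eq: "frechet_derivative (\<lambda>u. iter_dd x vs u $ k) (at u) v = iter_dd x (v # vs) u $ k"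
    if "u \<in> U" for u v
    using fun_cong[OF frechet_derivative_at[OF d[OF that]], of v] by (simp only:)
  show ?case
  proof (intro conjI ballI allI)
    fix v show "(\<lambda>u. frechet_derivative (\<lambda>u. iter_dd x vs u $ k) (at u) v) \<in> smooth_alg U x"
      by (rule smooth_alg.cong[OF smooth_alg.coord[of x "v # vs" k]]) (simp add: eq)
  qed (rule differentiableI[OF d])
next
  case (const c)
  then show ?case by (simp add: smooth_alg.const)
next
  case (add f g)
  have "(\<lambda>u. frechet_derivative (\<lambda>u. f u + g u) (at u) v) \<in> smooth_alg U x" for v
    by (rule smooth_alg.cong[OF smooth_alg.add[of "\<lambda>u. frechet_derivative f (at u) v" U x
          "\<lambda>u. frechet_derivative g (at u) v"]])
      (use add in \<open>simp_all add: frechet_derivative_add_at\<close>)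
  with add show ?case by simp
next
  case (mult f g)
  have "(\<lambda>u. frechet_derivative (\<lambda>u. f u * g u) (at u) v) \<in> smooth_alg U x" for v
    by (rule smooth_alg.cong[OF smooth_alg.add[OF
          smooth_alg.mult[of f U x "\<lambda>u. frechet_derivative g (at u) v"]
          smooth_alg.mult[of "\<lambda>u. frechet_derivative f (at u) v" U x g]]])
      (use mult in \<open>simp_all add: frechet_derivative_mult_at\<close>)
  with mult show ?case by simp
next
  case (inverse f)
  have "(\<lambda>u. frechet_derivative (\<lambda>u. inverse (f u)) (at u) v) \<in> smooth_alg U x" for v
    by (rule smooth_alg.cong[OF smooth_alg.mult[OF smooth_alg.const[of "-1"]
          smooth_alg.mult[OF smooth_alg.mult[of "\<lambda>u. inverse (f u)" U x "\<lambda>u. frechet_derivative f (at u) v"]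
          smooth_alg.inverse[of f U x]]]])
      (use inverse in \<open>simp_all add: smooth_alg.inverse frechet_derivative_inverse_at\<close>)
  with inverse show ?case by simp
next
  case (cong f g)
  have fd: "frechet_derivative g (at u) = frechet_derivative f (at u)" if "u \<in> U" for u
    using frechet_derivative_transform_within_open[OF _ U that, of f g] cong that by simp
  have "g differentiable at u" if "u \<in> U" for u
  proof -
    have "(f has_derivative frechet_derivative f (at u)) (at u)"
      using cong that frechet_derivative_works by blast
    then have "(g has_derivative frechet_derivative f (at u)) (at u)"
      by (rule has_derivative_transform_within_open[OF _ U that]) (use cong in simp)
    then show ?thesis by (rule differentiableI)
  qed
  moreover have "(\<lambda>u. frechet_derivative g (at u) v) \<in> smooth_alg U x" for v
    by (rule smooth_alg.cong[of "\<lambda>u. frechet_derivative f (at u) v"]) (use cong fd in simp_all)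
  ultimately show ?case by blast
qed

locale smooth_chart =
  fixes U :: "(real^'n) set" and x :: "real^'n \<Rightarrow> real^'m"
  assumes open_U: "open U" and smooth_x: "smooth_on U x"
begin

abbreviation "Sm \<equiv> smooth_alg U x"

lemma Sm_has_derivative: "f \<in> Sm \<Longrightarrow> u \<in> U \<Longrightarrow> (f has_derivative frechet_derivative f (at u)) (at u)"
  using smooth_alg_closed_derivative[OF open_U smooth_x] frechet_derivative_works by blast

lemma Sm_derivative: "f \<in> Sm \<Longrightarrow> (\<lambda>u. frechet_derivative f (at u) v) \<in> Sm"
  using smooth_alg_closed_derivative[OF open_U smooth_x] by blast

lemma Sm_cong: "f \<in> Sm \<Longrightarrow> (\<And>u. u \<in> U \<Longrightarrow> g u = f u) \<Longrightarrow> g \<in> Sm"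
  using smooth_alg.cong by blast

lemma Sm_minus: "f \<in> Sm \<Longrightarrow> (\<lambda>u. - f u) \<in> Sm"
  using smooth_alg.mult[OF smooth_alg.const[of "-1"]] by simp

lemma Sm_diff: "f \<in> Sm \<Longrightarrow> g \<in> Sm \<Longrightarrow> (\<lambda>u. f u - g u) \<in> Sm"
  using smooth_alg.add[of f U x "\<lambda>u. - g u"] Sm_minus by simp

lemma Sm_divide: "f \<in> Sm \<Longrightarrow> g \<in> Sm \<Longrightarrow> (\<And>u. u \<in> U \<Longrightarrow> g u \<noteq> 0) \<Longrightarrow> (\<lambda>u. f u / g u) \<in> Sm"
  using smooth_alg.mult[of f U x "\<lambda>u. inverse (g u)"] smooth_alg.inverse[of g U x]
  by (simp add: divide_inverse)

lemma Sm_sum: "finite A \<Longrightarrow> (\<And>a. a \<in> A \<Longrightarrow> F a \<in> Sm) \<Longrightarrow> (\<lambda>u. \<Sum>a\<in>A. F a u) \<in> Sm"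
  by (induction A rule: finite_induct) (auto intro: smooth_alg.const smooth_alg.add)

lemma Sm_prod: "finite A \<Longrightarrow> (\<And>a. a \<in> A \<Longrightarrow> F a \<in> Sm) \<Longrightarrow> (\<lambda>u. \<Prod>a\<in>A. F a u) \<in> Sm"
  by (induction A rule: finite_induct) (auto intro: smooth_alg.const smooth_alg.mult)

lemma Sm_det:
  fixes A :: "real^'n \<Rightarrow> real^'k^'k"
  assumes "\<And>i j. (\<lambda>u. A u $ i $ j) \<in> Sm"
  shows "(\<lambda>u. det (A u)) \<in> Sm"
  unfolding det_def
  by (intro Sm_sum smooth_alg.mult smooth_alg.const Sm_prod assms) auto

end

section \<open>Symmetry of second derivatives\<close>

lemma continuous_at_eq_if_values_meet_nearby:
  fixes f g :: "'a::metric_space \<Rightarrow> 'b::metric_space"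
  assumes f: "continuous (at u) f" and g: "continuous (at u) g"
    and meet: "\<And>m. m > 0 \<Longrightarrow> \<exists>y y'. dist y u < m \<and> dist y' u < m \<and> f y = g y'"
  shows "f u = g u"
proof (rule ccontr)
  assume "f u \<noteq> g u"
  then have d: "dist (f u) (g u) / 2 > 0" by simp
  obtain m1 where m1: "m1 > 0" "\<And>y. dist y u < m1 \<Longrightarrow> dist (f y) (f u) < dist (f u) (g u) / 2"
    using f d unfolding continuous_at_eps_delta by blast
  obtain m2 where m2: "m2 > 0" "\<And>y. dist y u < m2 \<Longrightarrow> dist (g y) (g u) < dist (f u) (g u) / 2"
    using g d unfolding continuous_at_eps_delta by blast
  obtain y y' where "dist y u < min m1 m2" "dist y' u < min m1 m2" "f y = g y'"
    using meet[of "min m1 m2"] m1 m2 by auto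
  then have "dist (f u) (g u) < dist (f u) (g u) / 2 + dist (f u) (g u) / 2"
    using m1(2)[of y] m2(2)[of y'] dist_triangle3[of "f u" "g u" "f y"] by (simp add: dist_commute)
  then show False by simp
qed

lemma small_parallelogram:
  fixes u W Z :: "'a::real_normed_vector"
  assumes "m > 0"
  obtains s where "s > 0"
    "\<And>a b. 0 \<le> a \<Longrightarrow> a \<le> s \<Longrightarrow> 0 \<le> b \<Longrightarrow> b \<le> s \<Longrightarrow> dist (u + a *\<^sub>R W + b *\<^sub>R Z) u < m"
proof
  define s where "s = m / (2 * (norm W + norm Z + 1))"
  have pos: "2 * (norm W + norm Z + 1) > 0" by (smt (verit) norm_ge_zero)
  then show "s > 0" using assms unfolding s_def by simp
  fix a b :: real assume ab: "0 \<le> a" "a \<le> s" "0 \<le> b" "b \<le> s"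
  have "dist (u + a *\<^sub>R W + b *\<^sub>R Z) u \<le> a * norm W + b * norm Z"
    using norm_triangle_ineq[of "a *\<^sub>R W" "b *\<^sub>R Z"] ab by (simp add: dist_norm)
  also have "\<dots> \<le> s * (norm W + norm Z + 1)"
    using mult_right_mono[OF ab(2) norm_ge_zero[of W]] mult_right_mono[OF ab(4) norm_ge_zero[of Z]]
      \<open>s > 0\<close> by (simp add: distrib_left)
  also have "\<dots> = m / 2" unfolding s_def using pos by (simp add: field_simps)
  finally show "dist (u + a *\<^sub>R W + b *\<^sub>R Z) u < m" using assms by simp
qed

lemma has_real_derivative_along_line:
  fixes g :: "'a::real_normed_vector \<Rightarrow> real"
  assumes "(g has_derivative g') (at (v + t *\<^sub>R V))"
  shows "((\<lambda>t. g (v + t *\<^sub>R V)) has_real_derivative g' V) (at t)"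
proof -
  have "((\<lambda>t. v + t *\<^sub>R V) has_derivative (\<lambda>h. h *\<^sub>R V)) (at t)"
    by (auto intro!: derivative_eq_intros)
  from has_derivative_compose[OF this assms]
  have "((\<lambda>t. g (v + t *\<^sub>R V)) has_derivative (\<lambda>h. g' (h *\<^sub>R V))) (at t)" by (simp add: o_def)
  moreover have "(\<lambda>h. g' (h *\<^sub>R V)) = (*) (g' V)"
    using linear_cmul[OF has_derivative_linear[OF assms]] by (auto simp: fun_eq_iff)
  ultimately show ?thesis unfolding has_field_derivative_def by simp
qed

context smooth_chart
begin

lemma second_difference_mvt:
  assumes f: "f \<in> Sm" and s: "0 < s"
    and square: "\<And>a b. 0 \<le> a \<Longrightarrow> a \<le> s \<Longrightarrow> 0 \<le> b \<Longrightarrow> b \<le> s \<Longrightarrow> u + a *\<^sub>R W + b *\<^sub>R Z \<in> U"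
  obtains a b where "0 < a" "a < s" "0 < b" "b < s"
    "f (u + s *\<^sub>R W + s *\<^sub>R Z) - f (u + s *\<^sub>R W) - f (u + s *\<^sub>R Z) + f u =
     s * s * frechet_derivative (\<lambda>y. frechet_derivative f (at y) W) (at (u + a *\<^sub>R W + b *\<^sub>R Z)) Z"
proof -
  define fW where "fW y = frechet_derivative f (at y) W" for y
  have fW: "fW \<in> Sm" unfolding fW_def by (rule Sm_derivative[OF f])
  have line: "((\<lambda>t. g (v + t *\<^sub>R V)) has_real_derivative frechet_derivative g (at (v + t *\<^sub>R V)) V) (at t)"
    if "g \<in> Sm" "v + t *\<^sub>R V \<in> U" for g v V t
    by (rule has_real_derivative_along_line[OF Sm_has_derivative[OF that]])
  define g where "g t = f (u + s *\<^sub>R Z + t *\<^sub>R W) - f (u + t *\<^sub>R W)" for t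
  have "(g has_real_derivative fW (u + s *\<^sub>R Z + t *\<^sub>R W) - fW (u + t *\<^sub>R W)) (at t)"
    if "0 \<le> t" "t \<le> s" for t
    unfolding g_def fW_def
    using square[of t s] square[of t 0] that s
    by (intro DERIV_diff line[OF f]) (simp_all add: algebra_simps)
  from MVT2[OF s this] obtain a where a: "0 < a" "a < s"
    and ga: "g s - g 0 = s * (fW (u + s *\<^sub>R Z + a *\<^sub>R W) - fW (u + a *\<^sub>R W))"
    by auto
  define k where "k t = fW (u + a *\<^sub>R W + t *\<^sub>R Z)" for t
  have "(k has_real_derivative frechet_derivative fW (at (u + a *\<^sub>R W + t *\<^sub>R Z)) Z) (at t)"
    if "0 \<le> t" "t \<le> s" for t
    unfolding k_def using square[of a t] that a by (intro line[OF fW]) simp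
  from MVT2[OF s this] obtain b where b: "0 < b" "b < s"
    and kb: "k s - k 0 = s * frechet_derivative fW (at (u + a *\<^sub>R W + b *\<^sub>R Z)) Z"
    by auto
  have "f (u + s *\<^sub>R W + s *\<^sub>R Z) - f (u + s *\<^sub>R W) - f (u + s *\<^sub>R Z) + f u = g s - g 0"
    unfolding g_def by (simp add: algebra_simps)
  also have "\<dots> = s * (k s - k 0)" unfolding ga k_def by (simp add: algebra_simps)
  also have "\<dots> = s * s * frechet_derivative fW (at (u + a *\<^sub>R W + b *\<^sub>R Z)) Z"
    unfolding kb by simp
  finally show ?thesis using that a b unfolding fW_def by blast
qed

lemma Sm_derivative_commute:
  assumes f: "f \<in> Sm" and u: "u \<in> U"
  shows "frechet_derivative (\<lambda>y. frechet_derivative f (at y) W) (at u) Z =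
         frechet_derivative (\<lambda>y. frechet_derivative f (at y) Z) (at u) W"
proof -
  define \<psi> where "\<psi> V V' y = frechet_derivative (\<lambda>y. frechet_derivative f (at y) V) (at y) V'"
    for V V' y
  have cont: "continuous (at u) (\<psi> V V')" for V V'
    unfolding \<psi>_def
    by (rule has_derivative_continuous[OF Sm_has_derivative[OF Sm_derivative[OF Sm_derivative[OF f]] u]])
  have "\<psi> W Z u = \<psi> Z W u"
  proof (rule continuous_at_eq_if_values_meet_nearby[OF cont cont])
    fix m :: real assume "m > 0"
    obtain r where r: "r > 0" "ball u r \<subseteq> U" using open_U u open_contains_ball by blast
    obtain s where s: "s > 0" and near: "\<And>a b. 0 \<le> a \<Longrightarrow> a \<le> s \<Longrightarrow> 0 \<le> b \<Longrightarrow> b \<le> s \<Longrightarrow>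
        dist (u + a *\<^sub>R W + b *\<^sub>R Z) u < min m r"
      using small_parallelogram[of "min m r" u W Z] \<open>m > 0\<close> r by (metis min_less_iff_conj)
    have square: "u + a *\<^sub>R W + b *\<^sub>R Z \<in> U" "u + b *\<^sub>R Z + a *\<^sub>R W \<in> U"
      if "0 \<le> a" "a \<le> s" "0 \<le> b" "b \<le> s" for a b
      using near[OF that] r by (auto simp: dist_commute algebra_simps)
    obtain a b where ab: "0 < a" "a < s" "0 < b" "b < s" and e1:
      "f (u + s *\<^sub>R W + s *\<^sub>R Z) - f (u + s *\<^sub>R W) - f (u + s *\<^sub>R Z) + f u
        = s * s * \<psi> W Z (u + a *\<^sub>R W + b *\<^sub>R Z)"
      using second_difference_mvt[OF f s square(1)] unfolding \<psi>_def by blast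
    obtain a' b' where ab': "0 < a'" "a' < s" "0 < b'" "b' < s" and e2:
      "f (u + s *\<^sub>R Z + s *\<^sub>R W) - f (u + s *\<^sub>R Z) - f (u + s *\<^sub>R W) + f u
        = s * s * \<psi> Z W (u + a' *\<^sub>R Z + b' *\<^sub>R W)"
      using second_difference_mvt[OF f s square(2)] unfolding \<psi>_def by blast
    have "\<psi> W Z (u + a *\<^sub>R W + b *\<^sub>R Z) = \<psi> Z W (u + a' *\<^sub>R Z + b' *\<^sub>R W)"
      using e1 e2 s by (simp add: algebra_simps)
    moreover have "dist (u + a *\<^sub>R W + b *\<^sub>R Z) u < m" "dist (u + a' *\<^sub>R Z + b' *\<^sub>R W) u < m"
      using near[of a b] near[of b' a'] ab ab' by (auto simp: algebra_simps)
    ultimately show "\<exists>y y'. dist y u < m \<and> dist y' u < m \<and> \<psi> W Z y = \<psi> Z W y'" by blast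
  qed
  then show ?thesis unfolding \<psi>_def .
qed

end

lemma frechet_derivative_transform_open:
  assumes "(F has_derivative F') (at u)" "open U" "u \<in> U" "\<And>w. w \<in> U \<Longrightarrow> G w = F w"
  shows "frechet_derivative G (at u) = F'"
proof -
  have "(G has_derivative F') (at u)"
    by (rule has_derivative_transform_within_open[OF assms(1-3)]) (simp add: assms(4))
  then show ?thesis by (rule frechet_derivative_at[symmetric])
qed

lemma linear_axis_expansion:
  assumes "linear f"
  shows "f (x::real^'n) = (\<Sum>i\<in>UNIV. x $ i *\<^sub>R f (axis i 1))"
proof -
  have "f x = f (\<Sum>i\<in>UNIV. x $ i *\<^sub>R axis i 1)"
    using basis_expansion[of x] by (simp add: scalar_mult_eq_scaleR)
  also have "\<dots> = (\<Sum>i\<in>UNIV. x $ i *\<^sub>R f (axis i 1))"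
    by (simp add: linear_sum[OF assms] linear_cmul[OF assms])
  finally show ?thesis .
qed

lemma linear_frechet_derivative_parameter:
  assumes d: "\<And>a. ((\<lambda>w. F w a) has_derivative frechet_derivative (\<lambda>w. F w a) (at u)) (at u)"
    and lin: "\<And>w. w \<in> U \<Longrightarrow> linear (F w)" and U: "open U" "u \<in> U"
  shows "linear (\<lambda>a. frechet_derivative (\<lambda>w. F w a) (at u) W)"
proof (rule linearI)
  fix a b
  have "frechet_derivative (\<lambda>w. F w (a + b)) (at u) =
      (\<lambda>v. frechet_derivative (\<lambda>w. F w a) (at u) v + frechet_derivative (\<lambda>w. F w b) (at u) v)"
    by (rule frechet_derivative_transform_open[OF has_derivative_add[OF d d] U])
      (simp add: linear_add[OF lin])
  then show "frechet_derivative (\<lambda>w. F w (a + b)) (at u) W =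
      frechet_derivative (\<lambda>w. F w a) (at u) W + frechet_derivative (\<lambda>w. F w b) (at u) W"
    by simp
next
  fix c :: real and a
  have "frechet_derivative (\<lambda>w. F w (c *\<^sub>R a)) (at u) =
      (\<lambda>v. c *\<^sub>R frechet_derivative (\<lambda>w. F w a) (at u) v)"
    by (rule frechet_derivative_transform_open[OF has_derivative_scaleR_right[OF d] U])
      (simp add: linear_cmul[OF lin])
  then show "frechet_derivative (\<lambda>w. F w (c *\<^sub>R a)) (at u) W =
      c *\<^sub>R frechet_derivative (\<lambda>w. F w a) (at u) W"
    by simp
qed

context smooth_chart
begin

definition smooth_vec :: "(real^'n \<Rightarrow> real^'k) \<Rightarrow> bool" where
  "smooth_vec F \<longleftrightarrow> (\<forall>k. (\<lambda>w. F w $ k) \<in> Sm)"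

lemma smooth_vecI: "(\<And>k. (\<lambda>w. F w $ k) \<in> Sm) \<Longrightarrow> smooth_vec F"
  unfolding smooth_vec_def by blast

lemma smooth_vec_nth: "smooth_vec F \<Longrightarrow> (\<lambda>w. F w $ k) \<in> Sm"
  unfolding smooth_vec_def by blast

lemma frechet_derivative_smooth_vec:
  assumes "smooth_vec F" "u \<in> U"
  shows "frechet_derivative F (at u) = (\<lambda>v. \<chi> k. frechet_derivative (\<lambda>w. F w $ k) (at u) v)"
  using Sm_has_derivative[OF smooth_vec_nth[OF assms(1)] assms(2)]
  by (intro frechet_derivative_at[symmetric] has_derivative_vec_componentwise) simp

lemma smooth_vec_has_derivative:
  assumes "smooth_vec F" "u \<in> U"
  shows "(F has_derivative frechet_derivative F (at u)) (at u)"
  unfolding frechet_derivative_smooth_vec[OF assms]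
  by (rule has_derivative_vec_componentwise)
    (simp add: Sm_has_derivative[OF smooth_vec_nth[OF assms(1)] assms(2)])

lemma frechet_derivative_smooth_vec_nth:
  "smooth_vec F \<Longrightarrow> u \<in> U \<Longrightarrow>
    frechet_derivative F (at u) v $ k = frechet_derivative (\<lambda>w. F w $ k) (at u) v"
  by (simp add: frechet_derivative_smooth_vec)

lemma smooth_vec_linear: "smooth_vec F \<Longrightarrow> u \<in> U \<Longrightarrow> linear (frechet_derivative F (at u))"
  using smooth_vec_has_derivative has_derivative_linear by blast

lemma smooth_vec_cong:
  assumes "smooth_vec F" "\<And>u. u \<in> U \<Longrightarrow> G u = F u"
  shows "smooth_vec G"
proof (rule smooth_vecI)
  fix k show "(\<lambda>w. G w $ k) \<in> Sm"
    by (rule Sm_cong[OF smooth_vec_nth[OF assms(1)]]) (simp add: assms(2))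
qed

lemma smooth_vec_derivative:
  assumes "smooth_vec F" shows "smooth_vec (\<lambda>w. frechet_derivative F (at w) v)"
proof (rule smooth_vecI)
  fix k show "(\<lambda>w. frechet_derivative F (at w) v $ k) \<in> Sm"
    by (rule Sm_cong[OF Sm_derivative[OF smooth_vec_nth[OF assms], of k v]])
      (simp add: frechet_derivative_smooth_vec_nth[OF assms])
qed

lemma smooth_vec_diff: "smooth_vec F \<Longrightarrow> smooth_vec G \<Longrightarrow> smooth_vec (\<lambda>w. F w - G w)"
  unfolding smooth_vec_def by (simp add: Sm_diff)

lemma smooth_vec_scaleR: "f \<in> Sm \<Longrightarrow> smooth_vec G \<Longrightarrow> smooth_vec (\<lambda>w. f w *\<^sub>R G w)"
  unfolding smooth_vec_def by (simp add: smooth_alg.mult)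

lemma smooth_vec_sum:
  "finite A \<Longrightarrow> (\<And>a. a \<in> A \<Longrightarrow> smooth_vec (F a)) \<Longrightarrow> smooth_vec (\<lambda>w. \<Sum>a\<in>A. F a w)"
  unfolding smooth_vec_def by (simp add: sum_component Sm_sum)

lemma smooth_vec_derivative_commute:
  assumes F: "smooth_vec F" and u: "u \<in> U"
  shows "frechet_derivative (\<lambda>y. frechet_derivative F (at y) W) (at u) Z =
         frechet_derivative (\<lambda>y. frechet_derivative F (at y) Z) (at u) W"
proof -
  have "frechet_derivative (\<lambda>y. frechet_derivative F (at y) V) (at u) V' $ k =
      frechet_derivative (\<lambda>y. frechet_derivative (\<lambda>w. F w $ k) (at y) V) (at u) V'" for V V' k
  proof -
    have "frechet_derivative (\<lambda>y. frechet_derivative F (at y) V) (at u) V' $ k =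
        frechet_derivative (\<lambda>y. frechet_derivative F (at y) V $ k) (at u) V'"
      by (rule frechet_derivative_smooth_vec_nth[OF smooth_vec_derivative[OF F] u])
    also have "\<dots> = frechet_derivative (\<lambda>y. frechet_derivative (\<lambda>w. F w $ k) (at y) V) (at u) V'"
      by (subst frechet_derivative_transform_open[OF
            Sm_has_derivative[OF Sm_derivative[OF smooth_vec_nth[OF F]] u] open_U u])
        (simp_all add: frechet_derivative_smooth_vec_nth[OF F])
    finally show ?thesis .
  qed
  then show ?thesis
    using Sm_derivative_commute[OF smooth_vec_nth[OF F] u] by (simp add: vec_eq_iff)
qed

lemma linear_frechet_derivative_smooth_parameter:
  assumes "\<And>a. smooth_vec (\<lambda>w. F w a)" "\<And>w. w \<in> U \<Longrightarrow> linear (F w)" "u \<in> U"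
  shows "linear (\<lambda>a. frechet_derivative (\<lambda>w. F w a) (at u) W)"
  using assms open_U
  by (intro linear_frechet_derivative_parameter smooth_vec_has_derivative) auto

lemma linear_frechet_derivative_Sm_parameter:
  assumes "\<And>a. (\<lambda>w. F w a) \<in> Sm" "\<And>w. w \<in> U \<Longrightarrow> linear (F w)" "u \<in> U"
  shows "linear (\<lambda>a. frechet_derivative (\<lambda>w. F w a) (at u) W)"
  using assms open_U
  by (intro linear_frechet_derivative_parameter Sm_has_derivative) auto

lemma smooth_vec_linear_solution:
  fixes A :: "real^'n \<Rightarrow> real^'k^'k" and b y :: "real^'n \<Rightarrow> real^'k"
  assumes A: "\<And>i j. (\<lambda>w. A w $ i $ j) \<in> Sm" and b: "smooth_vec b"
    and det: "\<And>w. w \<in> U \<Longrightarrow> det (A w) \<noteq> 0"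
    and solves: "\<And>w. w \<in> U \<Longrightarrow> A w *v y w = b w"
  shows "smooth_vec y"
proof (rule smooth_vecI)
  fix k
  have "(\<lambda>w. det (\<chi> i j. if j = k then b w $ i else A w $ i $ j) / det (A w)) \<in> Sm"
  proof (intro Sm_divide Sm_det det)
    fix i j show "(\<lambda>u. (\<chi> i j. if j = k then b u $ i else A u $ i $ j) $ i $ j) \<in> Sm"
      by (cases "j = k") (simp_all add: A smooth_vec_nth[OF b])
  qed (simp add: A)
  then show "(\<lambda>w. y w $ k) \<in> Sm"
    by (rule Sm_cong) (use cramer[OF det] solves in simp)
qed

lemma smooth_vec_linear_apply:
  fixes L :: "real^'n \<Rightarrow> real^'n \<Rightarrow> real^'k"
  assumes L: "\<And>a. smooth_vec (\<lambda>w. L w a)" and lin: "\<And>w. w \<in> U \<Longrightarrow> linear (L w)"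
    and A: "smooth_vec A" and u: "u \<in> U"
  shows "smooth_vec (\<lambda>w. L w (A w))"
    and "frechet_derivative (\<lambda>w. L w (A w)) (at u) W =
       frechet_derivative (\<lambda>w. L w (A u)) (at u) W + L u (frechet_derivative A (at u) W)"
proof -
  define e where "e i = axis i (1::real)" for i :: 'n
  define E where "E w = (\<Sum>i\<in>UNIV. A w $ i *\<^sub>R L w (e i))" for w
  have L_E: "L w (A w) = E w" if "w \<in> U" for w
    unfolding E_def e_def by (rule linear_axis_expansion[OF lin[OF that]])
  have "smooth_vec E"
    unfolding E_def by (intro smooth_vec_sum smooth_vec_scaleR smooth_vec_nth A L) auto
  then show "smooth_vec (\<lambda>w. L w (A w))" by (rule smooth_vec_cong) (simp add: L_E)
  define DA where "DA i = frechet_derivative (\<lambda>w. A w $ i) (at u)" for i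
  define DL where "DL i = frechet_derivative (\<lambda>w. L w (e i)) (at u)" for i
  have "(E has_derivative (\<lambda>h. \<Sum>i\<in>UNIV. A u $ i *\<^sub>R DL i h + DA i h *\<^sub>R L u (e i))) (at u)"
    unfolding E_def DA_def DL_def
    by (intro has_derivative_sum has_derivative_scaleR Sm_has_derivative smooth_vec_nth A u
        smooth_vec_has_derivative L)
  then have "frechet_derivative (\<lambda>w. L w (A w)) (at u) =
      (\<lambda>h. \<Sum>i\<in>UNIV. A u $ i *\<^sub>R DL i h + DA i h *\<^sub>R L u (e i))"
    by (rule frechet_derivative_transform_open[OF _ open_U u L_E])
  then have "frechet_derivative (\<lambda>w. L w (A w)) (at u) W =
      (\<Sum>i\<in>UNIV. A u $ i *\<^sub>R DL i W) + (\<Sum>i\<in>UNIV. DA i W *\<^sub>R L u (e i))"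
    by (simp only: sum.distrib)
  also have "(\<Sum>i\<in>UNIV. A u $ i *\<^sub>R DL i W) = frechet_derivative (\<lambda>w. L w (A u)) (at u) W"
    unfolding DL_def e_def
    by (rule linear_axis_expansion[symmetric, OF linear_frechet_derivative_smooth_parameter[OF L lin u]])
  also have "(\<Sum>i\<in>UNIV. DA i W *\<^sub>R L u (e i)) = L u (frechet_derivative A (at u) W)"
    using linear_axis_expansion[OF lin[OF u], of "frechet_derivative A (at u) W"]
    by (simp add: DA_def e_def frechet_derivative_smooth_vec_nth[OF A u])
  finally show "frechet_derivative (\<lambda>w. L w (A w)) (at u) W =
      frechet_derivative (\<lambda>w. L w (A u)) (at u) W + L u (frechet_derivative A (at u) W)" .
qed

end

section \<open>The Gauss formula\<close>

context smooth_chart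
begin

lemma x_has_derivative: "u \<in> U \<Longrightarrow> (x has_derivative dx x u) (at u)"
  using smooth_x unfolding smooth_on_def dx_def
  by (metis iter_dd.simps(1) frechet_derivative_works)

lemma linear_dx: "u \<in> U \<Longrightarrow> linear (dx x u)"
  using x_has_derivative has_derivative_linear by blast

lemma smooth_vec_x: "smooth_vec x"
  by (rule smooth_vecI) (use smooth_alg.coord[of x "[]"] in simp)

lemma smooth_vec_dx: "smooth_vec (\<lambda>w. dx x w Y)"
  by (rule smooth_vecI) (use smooth_alg.coord[of x "[Y]"] in \<open>simp add: dx_def\<close>)

lemma smooth_vec_ddx: "smooth_vec (\<lambda>w. ddx x w X Y)"
  by (rule smooth_vecI) (use smooth_alg.coord[of x "[X, Y]"] in \<open>simp add: ddx_def dx_def\<close>)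

lemma ddx_commute: "u \<in> U \<Longrightarrow> ddx x u X Y = ddx x u Y X"
  using smooth_vec_derivative_commute[OF smooth_vec_x, of u Y X] by (simp add: ddx_def dx_def)

lemma linear_ddx_left: "u \<in> U \<Longrightarrow> linear (\<lambda>X. ddx x u X Y)"
  unfolding ddx_def using smooth_vec_linear[OF smooth_vec_dx] by simp

end

lemma sum_UNIV_option: "(\<Sum>z\<in>(UNIV :: 'a::finite option set). g z) = g None + (\<Sum>k\<in>UNIV. g (Some k))"
  by (simp add: UNIV_option_conv sum.reindex)

locale centroaffine_chart = smooth_chart U x for U :: "(real^'n) set" and x :: "real^'n \<Rightarrow> real^'m" +
  fixes eps :: real
  assumes dim: "CARD('m) = CARD('n) + 1"
    and immersion: "\<forall>u\<in>U. inj (dx x u) \<and> x u \<notin> range (dx x u)"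
    and eps_cases: "eps = 1 \<or> eps = -1"
    and h_pos: "\<forall>u\<in>U. \<forall>X. X \<noteq> 0 \<longrightarrow> ca_h eps x u X X > 0"
begin

lemma transversal_decomp_unique:
  assumes u: "u \<in> U" and eq: "dx x u t1 + c1 *\<^sub>R x u = dx x u t2 + c2 *\<^sub>R x u"
  shows "t1 = t2 \<and> c1 = c2"
proof -
  have l: "linear (dx x u)" by (rule linear_dx[OF u])
  have diff: "(c1 - c2) *\<^sub>R x u = dx x u (t2 - t1)"
    using eq by (simp add: linear_diff[OF l] algebra_simps)
  have c: "c1 = c2"
  proof (rule ccontr)
    assume "c1 \<noteq> c2"
    then have "x u = dx x u ((1 / (c1 - c2)) *\<^sub>R (t2 - t1))"
      using diff[symmetric] by (simp add: linear_cmul[OF l])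
    then show False using immersion u by auto
  qed
  then have "dx x u t1 = dx x u t2" using eq by simp
  then show ?thesis using immersion u c unfolding inj_def by blast
qed

text \<open>Since \<open>CARD('m) = CARD('n) + 1\<close>, the indices of \<open>'m\<close> can be matched with
  \<open>'n option\<close>: \<open>Some k\<close> labels the tangent vector \<open>x\<^sub>*(e\<^sub>k)\<close> and \<open>None\<close> the position
  vector \<open>x\<close> in the frame matrix below.\<close>

definition frame_index :: "'m \<Rightarrow> 'n option" where
  "frame_index = (SOME b. bij b)"

lemma bij_frame_index: "bij frame_index"
proof -
  have "\<exists>b::'m \<Rightarrow> 'n option. bij_betw b UNIV UNIV"
    by (rule finite_same_card_bij) (auto simp: dim card_UNIV_option)
  then show ?thesis unfolding frame_index_def by (metis someI_ex)
qed

definition frame_matrix :: "real^'n \<Rightarrow> real^'m^'m" where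
  "frame_matrix w = (\<chi> r j. (case frame_index j of Some k \<Rightarrow> dx x w (axis k 1) | None \<Rightarrow> x w) $ r)"

definition frame_coords :: "real^'n \<Rightarrow> real \<Rightarrow> real^'m" where
  "frame_coords t c = (\<chi> j. case frame_index j of Some k \<Rightarrow> t $ k | None \<Rightarrow> c)"

lemma frame_matrix_mult:
  assumes u: "u \<in> U"
  shows "frame_matrix u *v frame_coords t c = dx x u t + c *\<^sub>R x u"
proof -
  have "(frame_matrix u *v frame_coords t c) $ r = (dx x u t + c *\<^sub>R x u) $ r" for r
  proof -
    define g where "g z = (case z of Some k \<Rightarrow> dx x u (axis k 1) $ r * t $ k | None \<Rightarrow> x u $ r * c)"
      for z
    have "(frame_matrix u *v frame_coords t c) $ r = (\<Sum>j\<in>UNIV. g (frame_index j))"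
      unfolding matrix_vector_mult_def frame_matrix_def frame_coords_def g_def
      by (auto intro!: sum.cong split: option.split)
    also have "\<dots> = (\<Sum>z\<in>UNIV. g z)"
      by (rule sum.reindex_bij_betw) (use bij_frame_index in \<open>simp add: bij_def bij_betw_def\<close>)
    also have "\<dots> = x u $ r * c + (\<Sum>k\<in>UNIV. dx x u (axis k 1) $ r * t $ k)"
      unfolding sum_UNIV_option g_def by simp
    also have "\<dots> = (dx x u t + c *\<^sub>R x u) $ r"
      by (subst linear_axis_expansion[OF linear_dx[OF u], of t]) (simp add: sum_component algebra_simps)
    finally show ?thesis .
  qed
  then show ?thesis unfolding vec_eq_iff by blast
qed

lemma frame_coords_nth:
  "frame_coords t c $ inv frame_index (Some k) = t $ k"
  "frame_coords t c $ inv frame_index None = c"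
  unfolding frame_coords_def using bij_frame_index by (simp_all add: bij_def surj_f_inv_f)

lemma frame_coords_surj: "\<exists>t c. y = frame_coords t c"
proof -
  have "y $ j = frame_coords (\<chi> k. y $ inv frame_index (Some k)) (y $ inv frame_index None) $ j" for j
    using bij_frame_index inv_f_f[of frame_index j]
    by (cases "frame_index j") (auto simp: frame_coords_def bij_def)
  then show ?thesis unfolding vec_eq_iff by blast
qed

lemma det_frame_matrix_nonzero:
  assumes u: "u \<in> U"
  shows "det (frame_matrix u) \<noteq> 0"
proof -
  have "inj ((*v) (frame_matrix u))"
  proof (rule linear_injective_0[THEN iffD2, OF matrix_vector_mul_linear], intro allI impI)
    fix y assume y0: "frame_matrix u *v y = 0"
    obtain t c where y: "y = frame_coords t c" using frame_coords_surj by blast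
    have "dx x u t + c *\<^sub>R x u = dx x u 0 + 0 *\<^sub>R x u"
      using y0 frame_matrix_mult[OF u] y linear_0[OF linear_dx[OF u]] by simp
    from transversal_decomp_unique[OF u this] show "y = 0"
      using y by (simp add: frame_coords_def vec_eq_iff split: option.splits)
  qed
  then show ?thesis using det_nz_iff_inj[OF matrix_vector_mul_linear, of "frame_matrix u"]
    by (simp add: matrix_of_matrix_vector_mul)
qed

lemma frame_matrix_smooth: "(\<lambda>w. frame_matrix w $ i $ j) \<in> Sm"
  using smooth_vec_nth[OF smooth_vec_x] smooth_vec_nth[OF smooth_vec_dx]
  by (cases "frame_index j") (simp_all add: frame_matrix_def)

lemma transversal_decomp_exists:
  assumes u: "u \<in> U"
  obtains t c where "v = dx x u t + c *\<^sub>R x u"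
proof -
  obtain B where "frame_matrix u ** B = mat 1"
    using det_frame_matrix_nonzero[OF u] invertible_det_nz unfolding invertible_def by blast
  then have "frame_matrix u *v (B *v v) = v" by (simp add: matrix_vector_mul_assoc)
  then show ?thesis using that frame_matrix_mult[OF u] frame_coords_surj by metis
qed

lemma gauss_formula:
  assumes u: "u \<in> U"
  shows "ddx x u X Y = dx x u (ca_nabla eps x u X Y) + ca_h eps x u X Y *\<^sub>R ((- eps) *\<^sub>R x u)"
proof -
  have scale: "c *\<^sub>R ((- eps) *\<^sub>R v) = (- eps * c) *\<^sub>R v" for c and v :: "real^'m"
    by (simp add: mult.commute)
  obtain t c where "ddx x u X Y = dx x u t + c *\<^sub>R x u"
    using transversal_decomp_exists[OF u] by blast
  then have tc: "ddx x u X Y = dx x u t + (- eps * c) *\<^sub>R ((- eps) *\<^sub>R x u)"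
    using eps_cases by auto
  have unique: "t' = t \<and> c' = - eps * c"
    if "ddx x u X Y = dx x u t' + c' *\<^sub>R ((- eps) *\<^sub>R x u)" for t' c'
  proof -
    have "dx x u t' + (- eps * c') *\<^sub>R x u = dx x u t + (- eps * (- eps * c)) *\<^sub>R x u"
      using that tc by (simp only: scale)
    from transversal_decomp_unique[OF u this] show ?thesis using eps_cases by auto
  qed
  have "ca_h eps x u X Y = - eps * c"
    unfolding ca_h_def by (rule the_equality) (use tc unique in blast)+
  moreover have "ca_nabla eps x u X Y = t"
    unfolding ca_nabla_def by (rule the_equality) (use tc unique in blast)+
  ultimately show ?thesis using tc by simp
qed

lemma gauss_formula_unique:
  assumes u: "u \<in> U" and "ddx x u X Y = dx x u t + c *\<^sub>R ((- eps) *\<^sub>R x u)"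
  shows "ca_nabla eps x u X Y = t \<and> ca_h eps x u X Y = c"
proof -
  have "dx x u (ca_nabla eps x u X Y) + (- eps * ca_h eps x u X Y) *\<^sub>R x u =
      dx x u t + (- eps * c) *\<^sub>R x u"
    using gauss_formula[OF u, of X Y] assms(2) by (simp add: mult.commute)
  from transversal_decomp_unique[OF u this] show ?thesis using eps_cases by auto
qed

lemma smooth_vec_nabla_h:
  "smooth_vec (\<lambda>w. frame_coords (ca_nabla eps x w X Y) (- eps * ca_h eps x w X Y))"
proof (rule smooth_vec_linear_solution[OF frame_matrix_smooth smooth_vec_ddx[of X Y]
      det_frame_matrix_nonzero])
  fix w assume "w \<in> U"
  then show "frame_matrix w *v frame_coords (ca_nabla eps x w X Y) (- eps * ca_h eps x w X Y) =
      ddx x w X Y"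
    unfolding frame_matrix_mult[OF \<open>w \<in> U\<close>] gauss_formula[OF \<open>w \<in> U\<close>] by (simp add: mult.commute)
qed

lemma smooth_vec_nabla: "smooth_vec (\<lambda>w. ca_nabla eps x w X Y)"
proof (rule smooth_vecI)
  fix k show "(\<lambda>w. ca_nabla eps x w X Y $ k) \<in> Sm"
    using smooth_vec_nth[OF smooth_vec_nabla_h, of X Y "inv frame_index (Some k)"]
    by (simp only: frame_coords_nth)
qed

lemma Sm_h: "(\<lambda>w. ca_h eps x w X Y) \<in> Sm"
proof -
  have "(\<lambda>w. (- eps) * (- eps * ca_h eps x w X Y)) \<in> Sm"
    using smooth_alg.mult[OF smooth_alg.const[of "- eps"]
        smooth_vec_nth[OF smooth_vec_nabla_h, of X Y "inv frame_index None"]]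
    by (simp only: frame_coords_nth)
  then show ?thesis using eps_cases by (auto elim: Sm_cong)
qed

end

context centroaffine_chart
begin

abbreviation "h u \<equiv> ca_h eps x u"
abbreviation "nabla u \<equiv> ca_nabla eps x u"
abbreviation "LC u \<equiv> ca_LC eps x u"
abbreviation "K u \<equiv> ca_K eps x u"
abbreviation "dh u \<equiv> ca_dh eps x u"

lemma nabla_h_commute:
  assumes u: "u \<in> U"
  shows "nabla u X Y = nabla u Y X" and "h u X Y = h u Y X"
  using gauss_formula_unique[OF u, of X Y] gauss_formula[OF u, of Y X] ddx_commute[OF u, of X Y]
  by metis+

lemma nabla_h_add_left:
  assumes u: "u \<in> U"
  shows "nabla u (A + B) Y = nabla u A Y + nabla u B Y \<and> h u (A + B) Y = h u A Y + h u B Y"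
proof (rule gauss_formula_unique[OF u])
  show "ddx x u (A + B) Y = dx x u (nabla u A Y + nabla u B Y) + (h u A Y + h u B Y) *\<^sub>R (- eps *\<^sub>R x u)"
    unfolding linear_add[OF linear_ddx_left[OF u]] gauss_formula[OF u, of A Y]
      gauss_formula[OF u, of B Y] linear_add[OF linear_dx[OF u]]
    by (simp add: algebra_simps)
qed

lemma nabla_h_scaleR_left:
  assumes u: "u \<in> U"
  shows "nabla u (c *\<^sub>R A) Y = c *\<^sub>R nabla u A Y \<and> h u (c *\<^sub>R A) Y = c * h u A Y"
proof (rule gauss_formula_unique[OF u])
  show "ddx x u (c *\<^sub>R A) Y = dx x u (c *\<^sub>R nabla u A Y) + (c * h u A Y) *\<^sub>R (- eps *\<^sub>R x u)"
    unfolding linear_cmul[OF linear_ddx_left[OF u]] gauss_formula[OF u, of A Y]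
      linear_cmul[OF linear_dx[OF u]]
    by (simp add: algebra_simps)
qed

lemma linear_nabla_left: "u \<in> U \<Longrightarrow> linear (\<lambda>A. nabla u A Y)"
  by (rule linearI) (simp_all add: nabla_h_add_left nabla_h_scaleR_left)

lemma linear_h_left: "u \<in> U \<Longrightarrow> linear (\<lambda>A. h u A Y)"
  by (rule linearI) (simp_all add: nabla_h_add_left nabla_h_scaleR_left)

lemma linear_nabla_right: "u \<in> U \<Longrightarrow> linear (nabla u X)"
  using linear_nabla_left[of u X] nabla_h_commute(1)[of u] by (simp add: linear_iff)

lemma linear_h_right: "u \<in> U \<Longrightarrow> linear (h u X)"
  using linear_h_left[of u X] nabla_h_commute(2)[of u] by (simp add: linear_iff)

lemma h_nondegenerate:
  assumes u: "u \<in> U" and "\<And>Z. h u t1 Z = h u t2 Z"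
  shows "t1 = t2"
proof -
  have "h u (t1 - t2) (t1 - t2) = 0"
    using assms(2)[of "t1 - t2"] linear_diff[OF linear_h_left[OF u]] by simp
  then have "t1 - t2 = 0" using h_pos u by (metis less_irrefl)
  then show ?thesis by simp
qed

lemma Sm_dh: "(\<lambda>w. dh w Z X Y) \<in> Sm"
  unfolding ca_dh_def by (rule Sm_derivative[OF Sm_h])

lemma linear_dh:
  assumes u: "u \<in> U"
  shows "linear (\<lambda>Z. dh u Z X Y)" "linear (\<lambda>X. dh u Z X Y)" "linear (\<lambda>Y. dh u Z X Y)"
  unfolding ca_dh_def
proof -
  show "linear (\<lambda>Z. frechet_derivative (\<lambda>w. h w X Y) (at u) Z)"
    using has_derivative_linear[OF Sm_has_derivative[OF Sm_h u]] by simp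
  show "linear (\<lambda>X. frechet_derivative (\<lambda>w. h w X Y) (at u) Z)"
    by (rule linear_frechet_derivative_Sm_parameter[where F="\<lambda>w X. h w X Y", OF Sm_h linear_h_left u])
  show "linear (\<lambda>Y. frechet_derivative (\<lambda>w. h w X Y) (at u) Z)"
    by (rule linear_frechet_derivative_Sm_parameter[where F="\<lambda>w Y. h w X Y", OF Sm_h linear_h_right u])
qed

lemma dh_commute:
  assumes u: "u \<in> U"
  shows "dh u Z X Y = dh u Z Y X"
  unfolding ca_dh_def
  using frechet_derivative_transform_open[OF Sm_has_derivative[OF Sm_h u] open_U u,
      of "\<lambda>w. h w Y X" X Y] nabla_h_commute(2)
  by simp

definition koszul :: "real^'n \<Rightarrow> real^'n \<Rightarrow> real^'n \<Rightarrow> real^'n \<Rightarrow> real" where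
  "koszul u X Y Z = (dh u X Y Z + dh u Y X Z - dh u Z X Y) / 2"

lemma linear_koszul:
  assumes u: "u \<in> U"
  shows "linear (koszul u X Y)"
  by (rule linearI) (simp_all add: koszul_def linear_add[OF linear_dh(1)[OF u]]
      linear_add[OF linear_dh(3)[OF u]] linear_cmul[OF linear_dh(1)[OF u]]
      linear_cmul[OF linear_dh(3)[OF u]] field_simps)

definition metric_matrix :: "real^'n \<Rightarrow> real^'n^'n" where
  "metric_matrix u = (\<chi> i j. h u (axis j 1) (axis i 1))"

lemma metric_matrix_mult:
  assumes u: "u \<in> U"
  shows "(metric_matrix u *v t) $ i = h u t (axis i 1)"
  unfolding matrix_vector_mult_def metric_matrix_def
  using linear_axis_expansion[OF linear_h_left[OF u], of t "axis i 1"] by (simp add: mult.commute)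

lemma det_metric_matrix_nonzero:
  assumes u: "u \<in> U"
  shows "det (metric_matrix u) \<noteq> 0"
proof -
  have "inj ((*v) (metric_matrix u))"
  proof (rule linear_injective_0[THEN iffD2, OF matrix_vector_mul_linear], intro allI impI)
    fix t assume "metric_matrix u *v t = 0"
    then have "h u t (axis i 1) = 0" for i using metric_matrix_mult[OF u] by (metis zero_index)
    then have "h u t t = 0" using linear_axis_expansion[OF linear_h_right[OF u], of t t] by simp
    then show "t = 0" using h_pos u by (metis less_irrefl)
  qed
  then show ?thesis using det_nz_iff_inj[OF matrix_vector_mul_linear, of "metric_matrix u"]
    by (simp add: matrix_of_matrix_vector_mul)
qed

lemma LC_koszul:
  assumes u: "u \<in> U"
  shows "h u (LC u X Y) Z = koszul u X Y Z"
proof -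
  obtain B where "metric_matrix u ** B = mat 1"
    using det_metric_matrix_nonzero[OF u] invertible_det_nz unfolding invertible_def by blast
  then have solves: "metric_matrix u *v (B *v (\<chi> i. koszul u X Y (axis i 1))) =
      (\<chi> i. koszul u X Y (axis i 1))"
    by (simp add: matrix_vector_mul_assoc)
  define t where "t = B *v (\<chi> i. koszul u X Y (axis i 1))"
  have t_axis: "h u t (axis i 1) = koszul u X Y (axis i 1)" for i
    using solves metric_matrix_mult[OF u, of t i] unfolding t_def by simp
  have t: "\<forall>Z. h u t Z = koszul u X Y Z"
  proof
    fix Z show "h u t Z = koszul u X Y Z"
      by (subst linear_axis_expansion[OF linear_h_right[OF u], of t Z],
          subst linear_axis_expansion[OF linear_koszul[OF u], of X Y Z]) (simp add: t_axis)
  qed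
  have "LC u X Y = t"
    unfolding ca_LC_def koszul_def[symmetric]
    by (rule the_equality) (use t h_nondegenerate[OF u] in auto)
  then show ?thesis using t by simp
qed

lemma LC_eqI: "u \<in> U \<Longrightarrow> (\<And>Z. h u t Z = koszul u X Y Z) \<Longrightarrow> LC u X Y = t"
  using h_nondegenerate LC_koszul by metis

lemma smooth_vec_LC: "smooth_vec (\<lambda>w. LC w X Y)"
proof (rule smooth_vec_linear_solution[where b="\<lambda>w. \<chi> i. koszul w X Y (axis i 1)"])
  show "(\<lambda>w. metric_matrix w $ i $ j) \<in> Sm" for i j
    unfolding metric_matrix_def by (simp add: Sm_h)
  show "smooth_vec (\<lambda>w. \<chi> i. koszul w X Y (axis i 1))"
    by (rule smooth_vecI)
      (simp add: koszul_def Sm_divide Sm_diff smooth_alg.add Sm_dh smooth_alg.const)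
  show "metric_matrix w *v LC w X Y = (\<chi> i. koszul w X Y (axis i 1))" if "w \<in> U" for w
    using metric_matrix_mult[OF that] LC_koszul[OF that] by (simp add: vec_eq_iff)
qed (rule det_metric_matrix_nonzero)

lemma LC_commute: "u \<in> U \<Longrightarrow> LC u X Y = LC u Y X"
  by (rule LC_eqI) (simp_all add: LC_koszul koszul_def dh_commute)

lemma linear_LC_left:
  assumes u: "u \<in> U"
  shows "linear (\<lambda>A. LC u A Y)"
proof (rule linearI)
  fix A B show "LC u (A + B) Y = LC u A Y + LC u B Y"
    by (rule LC_eqI[OF u]) (simp add: LC_koszul[OF u] koszul_def linear_add[OF linear_h_left[OF u]]
        linear_add[OF linear_dh(1)[OF u]] linear_add[OF linear_dh(2)[OF u]] field_simps)
next
  fix c :: real and A show "LC u (c *\<^sub>R A) Y = c *\<^sub>R LC u A Y"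
    by (rule LC_eqI[OF u]) (simp add: LC_koszul[OF u] koszul_def linear_cmul[OF linear_h_left[OF u]]
        linear_cmul[OF linear_dh(1)[OF u]] linear_cmul[OF linear_dh(2)[OF u]] field_simps)
qed

lemma linear_LC_right: "u \<in> U \<Longrightarrow> linear (LC u X)"
  using linear_LC_left[of u X] LC_commute[of u] by (simp add: linear_iff)

lemma LC_metric_compatible:
  assumes u: "u \<in> U"
  shows "dh u W X Y = h u (LC u W X) Y + h u X (LC u W Y)"
  using LC_koszul[OF u, of W X Y] LC_koszul[OF u, of W Y X] nabla_h_commute(2)[OF u]
    dh_commute[OF u, of W X Y] dh_commute[OF u, of X W Y] dh_commute[OF u, of Y W X]
  unfolding koszul_def by simp

lemma smooth_vec_K: "smooth_vec (\<lambda>w. K w X Y)"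
  unfolding ca_K_def by (intro smooth_vec_diff smooth_vec_nabla smooth_vec_LC)

lemma K_commute: "u \<in> U \<Longrightarrow> K u X Y = K u Y X"
  unfolding ca_K_def using nabla_h_commute(1) LC_commute by metis

lemma linear_K_left: "u \<in> U \<Longrightarrow> linear (\<lambda>A. K u A Y)"
  unfolding ca_K_def by (intro linear_compose_sub linear_nabla_left linear_LC_left)

lemma linear_K_right: "u \<in> U \<Longrightarrow> linear (K u X)"
  unfolding ca_K_def by (intro linear_compose_sub linear_nabla_right linear_LC_right)

end

section \<open>Curvature identities, algebraically\<close>

text \<open>On a chart, a torsion-free connection is encoded by \<open>G A B = \<nabla>\<^sub>A B\<close> for constant
  vectors \<open>A\<close>, \<open>B\<close> and the directional derivatives \<open>dG W A B\<close> of these fields. Then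
  \<open>curvature_op dG G W Z V\<close> is \<open>R(W,Z)V\<close>, and if \<open>T = \<nabla>K\<close> with derivatives \<open>dT\<close>,
  \<open>alt_second_cov dT G T W Z X Y\<close> is \<open>(\<nabla>\<^sup>2K)(W,Z;X,Y) - (\<nabla>\<^sup>2K)(Z,W;X,Y)\<close>; the
  terms involving \<open>\<nabla>\<^sub>W Z\<close> cancel by the symmetry of \<open>G\<close>.\<close>

definition curvature_op ::
  "('v \<Rightarrow> 'v \<Rightarrow> 'v \<Rightarrow> 'v::real_vector) \<Rightarrow> ('v \<Rightarrow> 'v \<Rightarrow> 'v) \<Rightarrow> 'v \<Rightarrow> 'v \<Rightarrow> 'v \<Rightarrow> 'v" where
  "curvature_op dG G W Z V = dG W Z V - dG Z W V + G W (G Z V) - G Z (G W V)"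

definition alt_second_cov ::
  "('v \<Rightarrow> 'v \<Rightarrow> 'v \<Rightarrow> 'v \<Rightarrow> 'v::real_vector) \<Rightarrow> ('v \<Rightarrow> 'v \<Rightarrow> 'v) \<Rightarrow> ('v \<Rightarrow> 'v \<Rightarrow> 'v \<Rightarrow> 'v)
    \<Rightarrow> 'v \<Rightarrow> 'v \<Rightarrow> 'v \<Rightarrow> 'v \<Rightarrow> 'v" where
  "alt_second_cov dT G T W Z X Y =
     dT W Z X Y - dT Z W X Y + G W (T Z X Y) - G Z (T W X Y)
     - T Z (G W X) Y + T W (G Z X) Y - T Z X (G W Y) + T W X (G Z Y)"

lemma ricci_identity_algebraic:
  fixes G K :: "'v::real_vector \<Rightarrow> 'v \<Rightarrow> 'v" and dG dK CK :: "'v \<Rightarrow> 'v \<Rightarrow> 'v \<Rightarrow> 'v"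
    and ddK dCK :: "'v \<Rightarrow> 'v \<Rightarrow> 'v \<Rightarrow> 'v \<Rightarrow> 'v"
  assumes G: "\<And>A. linear (G A)" and K: "\<And>B. linear (\<lambda>A. K A B)" "\<And>A. linear (K A)"
    and ddK: "ddK W Z X Y = ddK Z W X Y"
    and CK: "\<And>A X Y. CK A X Y = dK A X Y + G A (K X Y) - K (G A X) Y - K X (G A Y)"
    and dCK: "\<And>W Z X Y. dCK W Z X Y = ddK W Z X Y + dG W Z (K X Y) + G Z (dK W X Y)
        - dK W (G Z X) Y - K (dG W Z X) Y - dK W X (G Z Y) - K X (dG W Z Y)"
  shows "alt_second_cov dCK G CK W Z X Y =
    curvature_op dG G W Z (K X Y) - K (curvature_op dG G W Z X) Y - K X (curvature_op dG G W Z Y)"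
proof -
  have K_left: "K (a + b) B = K a B + K b B" "K (a - b) B = K a B - K b B" for a b B
    using linear_add[OF K(1)] linear_diff[OF K(1)] by auto
  have K_right: "K B (a + b) = K B a + K B b" "K B (a - b) = K B a - K B b" for a b B
    using linear_add[OF K(2)] linear_diff[OF K(2)] by auto
  have G_right: "G B (a + b) = G B a + G B b" "G B (a - b) = G B a - G B b" for a b B
    using linear_add[OF G] linear_diff[OF G] by auto
  show ?thesis unfolding alt_second_cov_def curvature_op_def CK dCK
    by (simp add: K_left K_right G_right ddK algebra_simps)
qed

lemma alt_second_cov_parallel_multiple:
  fixes G :: "'v::real_vector \<Rightarrow> 'v \<Rightarrow> 'v" and CK :: "'v \<Rightarrow> 'v \<Rightarrow> 'v \<Rightarrow> 'v"
    and dCK :: "'v \<Rightarrow> 'v \<Rightarrow> 'v \<Rightarrow> 'v \<Rightarrow> 'v" and h :: "'v \<Rightarrow> 'v \<Rightarrow> real"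
    and dh :: "'v \<Rightarrow> 'v \<Rightarrow> 'v \<Rightarrow> real" and dmu :: "'v \<Rightarrow> real"
  assumes G: "\<And>A. linear (G A)" "\<And>A B. G A B = G B A"
    and h: "\<And>A B. h A B = h B A"
    and dh: "\<And>W X Y. dh W X Y = h (G W X) Y + h X (G W Y)"
    and CK: "\<And>A X Y. CK A X Y = mu *\<^sub>R (h X Y *\<^sub>R A + h X A *\<^sub>R Y + h Y A *\<^sub>R X)"
    and dCK: "\<And>W Z X Y. dCK W Z X Y = dmu W *\<^sub>R (h X Y *\<^sub>R Z + h X Z *\<^sub>R Y + h Y Z *\<^sub>R X)
        + mu *\<^sub>R (dh W X Y *\<^sub>R Z + dh W X Z *\<^sub>R Y + dh W Y Z *\<^sub>R X)"
  shows "alt_second_cov dCK G CK W Z X Y =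
    dmu W *\<^sub>R (h X Y *\<^sub>R Z + h X Z *\<^sub>R Y + h Y Z *\<^sub>R X)
    - dmu Z *\<^sub>R (h X Y *\<^sub>R W + h X W *\<^sub>R Y + h Y W *\<^sub>R X)"
proof -
  have G_right: "G B (a + b) = G B a + G B b" "G B (c *\<^sub>R a) = c *\<^sub>R G B a" for a b B c
    using linear_add[OF G(1)] linear_cmul[OF G(1)] by auto
  have h_G: "h A (G B C) = h (G B C) A" for A B C by (rule h)
  show ?thesis unfolding alt_second_cov_def CK dCK dh
    by (simp add: G_right h_G G(2)[of Z W] algebra_simps)
qed

lemma curvature_op_sum:
  fixes G K N :: "'v::real_vector \<Rightarrow> 'v \<Rightarrow> 'v" and dG dK dN CK :: "'v \<Rightarrow> 'v \<Rightarrow> 'v \<Rightarrow> 'v"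
  assumes G: "\<And>A. linear (G A)" "\<And>A B. G A B = G B A" and K: "\<And>A. linear (K A)"
    and N: "\<And>A B. N A B = G A B + K A B" and dN: "\<And>W A B. dN W A B = dG W A B + dK W A B"
    and CK: "\<And>A X Y. CK A X Y = dK A X Y + G A (K X Y) - K (G A X) Y - K X (G A Y)"
    and codazzi: "CK W Z V = CK Z W V"
  shows "curvature_op dN N W Z V = curvature_op dG G W Z V + K W (K Z V) - K Z (K W V)"
proof -
  have K_right: "K B (a + b) = K B a + K B b" for a b B
    using linear_add[OF K] by auto
  have G_right: "G B (a + b) = G B a + G B b" for a b B
    using linear_add[OF G(1)] by auto
  have dK: "dK W Z V = dK Z W V + G Z (K W V) - G W (K Z V) + K (G W Z) V - K (G Z W) V
      + K Z (G W V) - K W (G Z V)"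
    using codazzi unfolding CK by (simp add: algebra_simps)
  show ?thesis unfolding curvature_op_def N dN dK
    by (simp add: K_right G_right G(2)[of Z W] algebra_simps)
qed

section \<open>The Gauss equation and the Ricci identity\<close>

context centroaffine_chart
begin

lemma derivative_ddx:
  assumes p: "p \<in> U"
  shows "frechet_derivative (\<lambda>w. ddx x w X Y) (at p) W =
    dx x p (nabla p W (nabla p X Y) + frechet_derivative (\<lambda>w. nabla w X Y) (at p) W
      - (eps * h p X Y) *\<^sub>R W)
    - (eps * (h p W (nabla p X Y) + dh p W X Y)) *\<^sub>R x p"
proof -
  have dx_nabla: "smooth_vec (\<lambda>w. dx x w (nabla w X Y))"
    "frechet_derivative (\<lambda>w. dx x w (nabla w X Y)) (at p) W =
      ddx x p W (nabla p X Y) + dx x p (frechet_derivative (\<lambda>w. nabla w X Y) (at p) W)"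
    using smooth_vec_linear_apply[where L="dx x", OF smooth_vec_dx linear_dx smooth_vec_nabla p]
    by (simp_all add: ddx_def)
  have "((\<lambda>w. dx x w (nabla w X Y) - (eps * h w X Y) *\<^sub>R x w) has_derivative
      (\<lambda>v. frechet_derivative (\<lambda>w. dx x w (nabla w X Y)) (at p) v
        - ((eps * h p X Y) *\<^sub>R dx x p v + (eps * dh p v X Y) *\<^sub>R x p))) (at p)"
    unfolding ca_dh_def
    by (intro has_derivative_diff has_derivative_scaleR has_derivative_mult_right
        smooth_vec_has_derivative[OF dx_nabla(1) p] Sm_has_derivative[OF Sm_h p] x_has_derivative[OF p])
  moreover have "ddx x w X Y = dx x w (nabla w X Y) - (eps * h w X Y) *\<^sub>R x w" if "w \<in> U" for w
    using gauss_formula[OF that] by simp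
  ultimately have "frechet_derivative (\<lambda>w. ddx x w X Y) (at p) =
      (\<lambda>v. frechet_derivative (\<lambda>w. dx x w (nabla w X Y)) (at p) v
        - ((eps * h p X Y) *\<^sub>R dx x p v + (eps * dh p v X Y) *\<^sub>R x p))"
    by (rule frechet_derivative_transform_open[OF _ open_U p])
  then have "frechet_derivative (\<lambda>w. ddx x w X Y) (at p) W =
      ddx x p W (nabla p X Y) + dx x p (frechet_derivative (\<lambda>w. nabla w X Y) (at p) W)
      - ((eps * h p X Y) *\<^sub>R dx x p W + (eps * dh p W X Y) *\<^sub>R x p)"
    by (simp only: dx_nabla(2))
  then show ?thesis
    unfolding gauss_formula[OF p, of W "nabla p X Y"]
    by (simp add: linear_add[OF linear_dx[OF p]] linear_diff[OF linear_dx[OF p]]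
        linear_cmul[OF linear_dx[OF p]] algebra_simps)
qed

lemma gauss_equation:
  assumes p: "p \<in> U"
  shows "curvature_op (\<lambda>W A B. frechet_derivative (\<lambda>w. nabla w A B) (at p) W) (nabla p) W Z V =
    eps *\<^sub>R (h p Z V *\<^sub>R W - h p W V *\<^sub>R Z)"
proof -
  define dN where "dN W A B = frechet_derivative (\<lambda>w. nabla w A B) (at p) W" for W A B
  have "frechet_derivative (\<lambda>w. ddx x w Z V) (at p) W = frechet_derivative (\<lambda>w. ddx x w W V) (at p) Z"
    unfolding ddx_def using smooth_vec_derivative_commute[OF smooth_vec_dx p] by simp
  then have "dx x p (nabla p W (nabla p Z V) + dN W Z V - (eps * h p Z V) *\<^sub>R W)
      + (- eps * (h p W (nabla p Z V) + dh p W Z V)) *\<^sub>R x p =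
    dx x p (nabla p Z (nabla p W V) + dN Z W V - (eps * h p W V) *\<^sub>R Z)
      + (- eps * (h p Z (nabla p W V) + dh p Z W V)) *\<^sub>R x p"
    unfolding derivative_ddx[OF p] dN_def by simp
  from conjunct1[OF transversal_decomp_unique[OF p this]] show ?thesis
    unfolding curvature_op_def dN_def[symmetric] by (simp add: algebra_simps)
qed

lemma derivative_covK:
  assumes p: "p \<in> U"
  shows "frechet_derivative (\<lambda>w. ca_covK eps x w Z X Y) (at p) W =
    frechet_derivative (\<lambda>w. frechet_derivative (\<lambda>w'. K w' X Y) (at w) Z) (at p) W
    + frechet_derivative (\<lambda>w. LC w Z (K p X Y)) (at p) W
    + LC p Z (frechet_derivative (\<lambda>w. K w X Y) (at p) W)
    - frechet_derivative (\<lambda>w. K w (LC p Z X) Y) (at p) W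
    - K p (frechet_derivative (\<lambda>w. LC w Z X) (at p) W) Y
    - frechet_derivative (\<lambda>w. K w X (LC p Z Y)) (at p) W
    - K p X (frechet_derivative (\<lambda>w. LC w Z Y) (at p) W)"
proof -
  define T1 where "T1 = (\<lambda>w. frechet_derivative (\<lambda>w'. K w' X Y) (at w) Z)"
  define T2 where "T2 = (\<lambda>w. LC w Z (K w X Y))"
  define T3 where "T3 = (\<lambda>w. K w (LC w Z X) Y)"
  define T4 where "T4 = (\<lambda>w. K w X (LC w Z Y))"
  note T2 = smooth_vec_linear_apply[where L="\<lambda>w. LC w Z", OF smooth_vec_LC linear_LC_right
      smooth_vec_K p, of X Y]
  note T3 = smooth_vec_linear_apply[where L="\<lambda>w a. K w a Y", OF smooth_vec_K linear_K_left
      smooth_vec_LC p, of Z X]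
  note T4 = smooth_vec_linear_apply[where L="\<lambda>w. K w X", OF smooth_vec_K linear_K_right
      smooth_vec_LC p, of Z Y]
  have T1: "smooth_vec T1" unfolding T1_def by (rule smooth_vec_derivative[OF smooth_vec_K])
  have covK: "(\<lambda>w. ca_covK eps x w Z X Y) = (\<lambda>w. T1 w + T2 w - T3 w - T4 w)"
    unfolding T1_def T2_def T3_def T4_def ca_covK_def ca_K_def[symmetric] by simp
  have "((\<lambda>w. T1 w + T2 w - T3 w - T4 w) has_derivative
     (\<lambda>v. frechet_derivative T1 (at p) v + frechet_derivative T2 (at p) v
        - frechet_derivative T3 (at p) v - frechet_derivative T4 (at p) v)) (at p)"
    unfolding T2_def T3_def T4_def
    by (intro has_derivative_diff has_derivative_add smooth_vec_has_derivative T1 T2(1) T3(1) T4(1) p)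
  then have "frechet_derivative (\<lambda>w. ca_covK eps x w Z X Y) (at p) W =
      frechet_derivative T1 (at p) W + frechet_derivative T2 (at p) W
      - frechet_derivative T3 (at p) W - frechet_derivative T4 (at p) W"
    unfolding covK by (simp add: frechet_derivative_at[symmetric])
  then show ?thesis unfolding T1_def T2_def T3_def T4_def by (simp add: T2(2) T3(2) T4(2))
qed

lemma derivative_covK_parallel_multiple:
  assumes p: "p \<in> U" and dmu: "(\<mu> has_derivative dmu) (at p)"
    and cov: "\<forall>u\<in>U. \<forall>X Y Z. ca_covK eps x u Z X Y =
              \<mu> u *\<^sub>R (h u X Y *\<^sub>R Z + h u X Z *\<^sub>R Y + h u Y Z *\<^sub>R X)"
  shows "frechet_derivative (\<lambda>w. ca_covK eps x w Z X Y) (at p) W =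
    dmu W *\<^sub>R (h p X Y *\<^sub>R Z + h p X Z *\<^sub>R Y + h p Y Z *\<^sub>R X)
    + \<mu> p *\<^sub>R (dh p W X Y *\<^sub>R Z + dh p W X Z *\<^sub>R Y + dh p W Y Z *\<^sub>R X)"
proof -
  have "((\<lambda>w. h w A B *\<^sub>R C) has_derivative (\<lambda>v. dh p v A B *\<^sub>R C)) (at p)" for A B C
    unfolding ca_dh_def using has_derivative_scaleR[OF Sm_has_derivative[OF Sm_h p] has_derivative_const]
    by simp
  then have "((\<lambda>w. \<mu> w *\<^sub>R (h w X Y *\<^sub>R Z + h w X Z *\<^sub>R Y + h w Y Z *\<^sub>R X)) has_derivative
     (\<lambda>v. \<mu> p *\<^sub>R (dh p v X Y *\<^sub>R Z + dh p v X Z *\<^sub>R Y + dh p v Y Z *\<^sub>R X)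
        + dmu v *\<^sub>R (h p X Y *\<^sub>R Z + h p X Z *\<^sub>R Y + h p Y Z *\<^sub>R X))) (at p)"
    by (intro has_derivative_scaleR[OF dmu] has_derivative_add)
  then have "frechet_derivative (\<lambda>w. ca_covK eps x w Z X Y) (at p) =
     (\<lambda>v. \<mu> p *\<^sub>R (dh p v X Y *\<^sub>R Z + dh p v X Z *\<^sub>R Y + dh p v Y Z *\<^sub>R X)
        + dmu v *\<^sub>R (h p X Y *\<^sub>R Z + h p X Z *\<^sub>R Y + h p Y Z *\<^sub>R X))"
    by (rule frechet_derivative_transform_open[OF _ open_U p]) (use cov in auto)
  then show ?thesis by (simp add: algebra_simps)
qed

end

context centroaffine_chart
begin

lemma gauss_equation_LC:
  assumes p: "p \<in> U"
    and codazzi: "\<And>W Z V. ca_covK eps x p W Z V = ca_covK eps x p Z W V"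
  shows "curvature_op (\<lambda>W A B. frechet_derivative (\<lambda>w. LC w A B) (at p) W) (LC p) W Z V =
    eps *\<^sub>R (h p Z V *\<^sub>R W - h p W V *\<^sub>R Z) - K p W (K p Z V) + K p Z (K p W V)"
proof -
  define dLC where "dLC W A B = frechet_derivative (\<lambda>w. LC w A B) (at p) W" for W A B
  define dK where "dK W A B = frechet_derivative (\<lambda>w. K w A B) (at p) W" for W A B
  define dN where "dN W A B = frechet_derivative (\<lambda>w. nabla w A B) (at p) W" for W A B
  have dN: "dN W A B = dLC W A B + dK W A B" for W A B
  proof -
    have "((\<lambda>w. LC w A B + K w A B) has_derivative (\<lambda>v. dLC v A B + dK v A B)) (at p)"
      unfolding dLC_def dK_def
      by (intro has_derivative_add smooth_vec_has_derivative smooth_vec_LC smooth_vec_K p)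
    then have "frechet_derivative (\<lambda>w. nabla w A B) (at p) = (\<lambda>v. dLC v A B + dK v A B)"
      by (rule frechet_derivative_transform_open[OF _ open_U p]) (simp add: ca_K_def)
    then show ?thesis by (simp add: dN_def)
  qed
  have "curvature_op dN (nabla p) W Z V =
      curvature_op dLC (LC p) W Z V + K p W (K p Z V) - K p Z (K p W V)"
  proof (rule curvature_op_sum[where G="LC p" and K="K p" and N="nabla p" and dG=dLC and dK=dK
        and dN=dN and CK="ca_covK eps x p", OF linear_LC_right[OF p] LC_commute[OF p]
        linear_K_right[OF p] _ dN _ codazzi])
    show "ca_covK eps x p A X Y = dK A X Y + LC p A (K p X Y) - K p (LC p A X) Y - K p X (LC p A Y)"
      for A X Y unfolding dK_def ca_covK_def ca_K_def[symmetric] ..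
  qed (simp add: ca_K_def)
  then show ?thesis
    using gauss_equation[OF p, of W Z V] unfolding dLC_def dN_def by (simp add: algebra_simps)
qed

lemma ricci_identity_K:
  assumes p: "p \<in> U"
  defines "dLC \<equiv> \<lambda>W A B. frechet_derivative (\<lambda>w. LC w A B) (at p) W"
  shows "alt_second_cov (\<lambda>W Z X Y. frechet_derivative (\<lambda>w. ca_covK eps x w Z X Y) (at p) W)
      (LC p) (ca_covK eps x p) W Z X Y =
    curvature_op dLC (LC p) W Z (K p X Y) - K p (curvature_op dLC (LC p) W Z X) Y
      - K p X (curvature_op dLC (LC p) W Z Y)"
proof -
  define dK where "dK W A B = frechet_derivative (\<lambda>w. K w A B) (at p) W" for W A B
  define ddK where "ddK W Z X Y =
    frechet_derivative (\<lambda>w. frechet_derivative (\<lambda>w'. K w' X Y) (at w) Z) (at p) W" for W Z X Y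
  show ?thesis
  proof (rule ricci_identity_algebraic[where G="LC p" and K="K p" and dG=dLC and dK=dK and ddK=ddK,
        OF linear_LC_right[OF p] linear_K_left[OF p] linear_K_right[OF p]])
    show "ddK W Z X Y = ddK Z W X Y"
      unfolding ddK_def by (rule smooth_vec_derivative_commute[OF smooth_vec_K p])
    show "ca_covK eps x p A X Y = dK A X Y + LC p A (K p X Y) - K p (LC p A X) Y - K p X (LC p A Y)"
      for A X Y unfolding dK_def ca_covK_def ca_K_def[symmetric] ..
    show "frechet_derivative (\<lambda>w. ca_covK eps x w Z X Y) (at p) W = ddK W Z X Y
        + dLC W Z (K p X Y) + LC p Z (dK W X Y) - dK W (LC p Z X) Y
        - K p (dLC W Z X) Y - dK W X (LC p Z Y) - K p X (dLC W Z Y)" for W Z X Y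
      unfolding ddK_def dLC_def dK_def by (rule derivative_covK[OF p])
  qed
qed

lemma alt_second_cov_covK_parallel_multiple:
  assumes p: "p \<in> U" and dmu: "(\<mu> has_derivative dmu) (at p)"
    and cov: "\<forall>u\<in>U. \<forall>X Y Z. ca_covK eps x u Z X Y =
              \<mu> u *\<^sub>R (h u X Y *\<^sub>R Z + h u X Z *\<^sub>R Y + h u Y Z *\<^sub>R X)"
  shows "alt_second_cov (\<lambda>W Z X Y. frechet_derivative (\<lambda>w. ca_covK eps x w Z X Y) (at p) W)
      (LC p) (ca_covK eps x p) W Z X Y =
    dmu W *\<^sub>R (h p X Y *\<^sub>R Z + h p X Z *\<^sub>R Y + h p Y Z *\<^sub>R X)
    - dmu Z *\<^sub>R (h p X Y *\<^sub>R W + h p X W *\<^sub>R Y + h p Y W *\<^sub>R X)"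
proof (rule alt_second_cov_parallel_multiple[where G="LC p" and h="h p" and dh="dh p"
      and mu="\<mu> p" and dmu=dmu, OF linear_LC_right[OF p] LC_commute[OF p]
      nabla_h_commute(2)[OF p] LC_metric_compatible[OF p]])
  show "ca_covK eps x p A X Y = \<mu> p *\<^sub>R (h p X Y *\<^sub>R A + h p X A *\<^sub>R Y + h p Y A *\<^sub>R X)" for A X Y
    using cov p by blast
  show "frechet_derivative (\<lambda>w. ca_covK eps x w Z X Y) (at p) W =
      dmu W *\<^sub>R (h p X Y *\<^sub>R Z + h p X Z *\<^sub>R Y + h p Y Z *\<^sub>R X)
      + \<mu> p *\<^sub>R (dh p W X Y *\<^sub>R Z + dh p W X Z *\<^sub>R Y + dh p W Y Z *\<^sub>R X)" for W Z X Y
    by (rule derivative_covK_parallel_multiple[OF p dmu cov])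
qed

lemma ricci_identity_parallel_multiple:
  assumes p: "p \<in> U" and dmu: "(\<mu> has_derivative dmu) (at p)"
    and cov: "\<forall>u\<in>U. \<forall>X Y Z. ca_covK eps x u Z X Y =
              \<mu> u *\<^sub>R (h u X Y *\<^sub>R Z + h u X Z *\<^sub>R Y + h u Y Z *\<^sub>R X)"
  defines "S \<equiv> \<lambda>X Y Z. h p X Y *\<^sub>R Z + h p X Z *\<^sub>R Y + h p Y Z *\<^sub>R X"
    and "R \<equiv> \<lambda>W Z V. eps *\<^sub>R (h p Z V *\<^sub>R W - h p W V *\<^sub>R Z) - K p W (K p Z V) + K p Z (K p W V)"
  shows "dmu W *\<^sub>R S X Y Z - dmu Z *\<^sub>R S X Y W = R W Z (K p X Y) - K p (R W Z X) Y - K p X (R W Z Y)"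
proof -
  have codazzi: "ca_covK eps x p W Z V = ca_covK eps x p Z W V" for W Z V
    using cov p nabla_h_commute(2)[OF p, of Z W] nabla_h_commute(2)[OF p, of V W]
      nabla_h_commute(2)[OF p, of V Z]
    by (simp add: algebra_simps)
  have "curvature_op (\<lambda>W A B. frechet_derivative (\<lambda>w. LC w A B) (at p) W) (LC p) W Z V = R W Z V"
    for W Z V unfolding R_def by (rule gauss_equation_LC[OF p codazzi])
  then show ?thesis
    using ricci_identity_K[OF p, of W Z X Y] alt_second_cov_covK_parallel_multiple[OF p dmu cov]
    unfolding S_def by simp
qed

end

section \<open>Eigenvalues of \<open>K\<^sub>e\<^sub>1\<close>\<close>

context centroaffine_chart
begin

lemma eigenvalue_relation:
  assumes p: "p \<in> U" and dmu: "(\<mu> has_derivative dmu) (at p)"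
    and cov: "\<forall>u\<in>U. \<forall>X Y Z. ca_covK eps x u Z X Y =
              \<mu> u *\<^sub>R (h u X Y *\<^sub>R Z + h u X Z *\<^sub>R Y + h u Y Z *\<^sub>R X)"
    and orth: "\<forall>i j. h p (e i) (e j) = (if i = j then 1 else 0)"
    and eig: "\<forall>i. K p (e i1) (e i) = lam i *\<^sub>R e i"
    and i: "i \<noteq> i1"
  shows "dmu (e i) = 0"
    and "(lam i * lam i - lam i1 * lam i + eps) * (lam i1 - 2 * lam i) = - dmu (e i1)"
proof -
  define E where "E = e i"
  define E1 where "E1 = e i1"
  define c where "c = lam i * lam i - lam i1 * lam i + eps"
  have h_frame: "h p E1 E1 = 1" "h p E1 E = 0" "h p E E1 = 0" "h p E E = 1"
    unfolding E_def E1_def using orth i by auto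
  have K_frame: "K p E1 E1 = lam i1 *\<^sub>R E1" "K p E1 E = lam i *\<^sub>R E" "K p E E1 = lam i *\<^sub>R E"
    unfolding E_def E1_def using eig K_commute[OF p, of "e i" "e i1"] by auto
  have K_scaleR: "K p (a *\<^sub>R v) w = a *\<^sub>R K p v w" "K p v (a *\<^sub>R w) = a *\<^sub>R K p v w" for a v w
    using linear_cmul[OF linear_K_left[OF p]] linear_cmul[OF linear_K_right[OF p]] by auto
  have h_left: "h p (a *\<^sub>R v) w = a * h p v w" "h p (v + v') w = h p v w + h p v' w"
    "h p (v - v') w = h p v w - h p v' w" for a v v' w
    using linear_cmul[OF linear_h_left[OF p]] linear_add[OF linear_h_left[OF p]]
      linear_diff[OF linear_h_left[OF p]] by auto
  define R where "R W Z V = eps *\<^sub>R (h p Z V *\<^sub>R W - h p W V *\<^sub>R Z) - K p W (K p Z V) + K p Z (K p W V)"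
    for W Z V
  have R_E1: "R E E1 E1 = c *\<^sub>R E"
    unfolding R_def c_def by (simp add: h_frame K_frame K_scaleR algebra_simps)
  have R_KE1: "R E E1 (lam i1 *\<^sub>R E1) = (lam i1 * c) *\<^sub>R E"
    unfolding R_def c_def
    by (simp add: h_frame K_frame K_scaleR linear_cmul[OF linear_h_right[OF p]] algebra_simps)
  have "dmu E *\<^sub>R (h p E1 E1 *\<^sub>R E1 + h p E1 E1 *\<^sub>R E1 + h p E1 E1 *\<^sub>R E1)
      - dmu E1 *\<^sub>R (h p E1 E1 *\<^sub>R E + h p E1 E *\<^sub>R E1 + h p E1 E *\<^sub>R E1)
    = R E E1 (K p E1 E1) - K p (R E E1 E1) E1 - K p E1 (R E E1 E1)"
    unfolding R_def by (rule ricci_identity_parallel_multiple[OF p dmu cov])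
  then have main: "dmu E *\<^sub>R (E1 + E1 + E1) - dmu E1 *\<^sub>R E = (lam i1 * c) *\<^sub>R E
      - (c * lam i) *\<^sub>R E - (c * lam i) *\<^sub>R E"
    by (simp only: R_E1 R_KE1 K_scaleR K_frame h_frame scaleR_scaleR scaleR_one scaleR_zero_left
        add_0_right)
  have "3 * dmu E = 0"
    using arg_cong[OF main, of "\<lambda>v. h p v E1"] by (simp only: h_left h_frame) simp
  moreover have "- dmu E1 = c * (lam i1 - 2 * lam i)"
    using arg_cong[OF main, of "\<lambda>v. h p v E"] by (simp only: h_left h_frame) (simp add: algebra_simps)
  ultimately show "dmu (e i) = 0"
    and "(lam i * lam i - lam i1 * lam i + eps) * (lam i1 - 2 * lam i) = - dmu (e i1)"
    unfolding E_def E1_def c_def by simp_all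
qed

lemma linear_zero_on_orthonormal_frame:
  fixes e :: "'n \<Rightarrow> real^'n"
  assumes p: "p \<in> U" and orth: "\<forall>i j. h p (e i) (e j) = (if i = j then 1 else 0)"
    and f: "linear f" and zero: "\<And>i. f (e i) = 0"
  shows "f v = 0"
proof -
  define T where "T c = (\<Sum>i\<in>UNIV. c $ i *\<^sub>R e i)" for c :: "real^'n"
  have T: "linear T" unfolding T_def
    by (rule linearI) (simp_all add: scaleR_add_left sum.distrib scaleR_sum_right)
  have h_T: "h p (T c) (e j) = c $ j" for c j
  proof -
    have "h p (T c) (e j) = (\<Sum>i\<in>UNIV. c $ i * h p (e i) (e j))"
      unfolding T_def by (simp add: linear_sum[OF linear_h_left[OF p]] linear_cmul[OF linear_h_left[OF p]])
    also have "\<dots> = (\<Sum>i\<in>UNIV. if i = j then c $ i else 0)" using orth by (intro sum.cong) auto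
    also have "\<dots> = c $ j" by simp
    finally show ?thesis .
  qed
  have "inj T"
  proof (rule linear_injective_0[THEN iffD2, OF T], intro allI impI)
    fix c assume "T c = 0"
    then have "c $ j = 0" for j using h_T[of c j] linear_0[OF linear_h_left[OF p]] by simp
    then show "c = 0" by (simp add: vec_eq_iff)
  qed
  then obtain c where "v = T c"
    using linear_injective_imp_surjective[OF T] by (metis surjD)
  then show ?thesis
    unfolding T_def by (simp add: linear_sum[OF f] linear_cmul[OF f] zero)
qed

end

text \<open>Vieta: the cubic \<open>(t\<^sup>2 - L t + e)(L - 2t) - k\<close> has leading coefficient \<open>-2\<close> and
  quadratic coefficient \<open>3L\<close>.\<close>

lemma cubic_distinct_roots_sum:
  fixes a b c L e k :: real
  defines "q \<equiv> \<lambda>t. (t * t - L * t + e) * (L - 2 * t)"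
  assumes "q a = k" "q b = k" "q c = k" "a \<noteq> b" "a \<noteq> c" "b \<noteq> c"
  shows "2 * (a + b + c) = 3 * L"
proof -
  define B where "B s t = -2 * (s * s + s * t + t * t) + 3 * L * (s + t) - (L * L + 2 * e)" for s t
  have diff: "q s - q t = (s - t) * B s t" for s t
    unfolding q_def B_def by (simp add: algebra_simps)
  have "B a b = 0" "B a c = 0" using diff[of a b] diff[of a c] assms(2-6) by simp_all
  moreover have "B a b - B a c = (b - c) * (3 * L - 2 * (a + b + c))"
    unfolding B_def by (simp add: algebra_simps)
  ultimately show ?thesis using assms(7) by simp
qed

lemma card_cubic_roots_below_half:
  fixes t :: "'a \<Rightarrow> real"
  assumes "finite I"
    and root: "\<And>i. i \<in> I \<Longrightarrow> (t i * t i - L * t i + e) * (L - 2 * t i) = k"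
    and below: "\<And>i. i \<in> I \<Longrightarrow> 2 * t i < L"
  shows "card (t ` I) \<le> 2"
proof (rule ccontr)
  assume "\<not> card (t ` I) \<le> 2"
  then obtain T where T: "T \<subseteq> t ` I" "card T = 3"
    using obtain_subset_with_card_n[of 3 "t ` I"] by force
  then obtain a b c where "T = {a, b, c}" "a \<noteq> b" "a \<noteq> c" "b \<noteq> c"
    unfolding card_3_iff by blast
  with T(1) have abc: "a \<in> t ` I" "b \<in> t ` I" "c \<in> t ` I" "a \<noteq> b" "a \<noteq> c" "b \<noteq> c"
    by auto
  then have "2 * (a + b + c) = 3 * L"
    using root by (intro cubic_distinct_roots_sum) auto
  moreover have "2 * a < L" "2 * b < L" "2 * c < L" using abc(1-3) below by auto
  ultimately show False by simp
qed

theorem lemma4p1: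
  fixes U :: "(real^'n) set" and x :: "real^'n \<Rightarrow> real^'m" and eps :: real
    and \<mu> :: "real^'n \<Rightarrow> real" and p :: "real^'n"
    and e :: "'n \<Rightarrow> real^'n" and i1 :: 'n and lam :: "'n \<Rightarrow> real"
  assumes dim: "CARD('m) = CARD('n) + 1"
    and imm: "centroaffine_immersion U x"
    and convex: "loc_strongly_convex eps U x"
    and mu_smooth: "smooth_on U \<mu>"
    and mu_nonconst: "\<exists>u\<in>U. \<exists>v\<in>U. \<mu> u \<noteq> \<mu> v"
    and cov: "\<forall>u\<in>U. \<forall>X Y Z. ca_covK eps x u Z X Y =
              \<mu> u *\<^sub>R (ca_h eps x u X Y *\<^sub>R Z + ca_h eps x u X Z *\<^sub>R Y + ca_h eps x u Y Z *\<^sub>R X)"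
    and pU: "p \<in> U"
    and dmu: "frechet_derivative \<mu> (at p) \<noteq> (\<lambda>v. 0)"
    and orth: "\<forall>i j. ca_h eps x p (e i) (e j) = (if i = j then 1 else 0)"
    and maxi: "\<forall>v. ca_h eps x p v v = 1 \<longrightarrow>
                 ca_h eps x p (ca_K eps x p v v) v \<le> ca_h eps x p (ca_K eps x p (e i1) (e i1)) (e i1)"
    and eig: "\<forall>i. ca_K eps x p (e i1) (e i) = lam i *\<^sub>R e i"
    and ineq: "\<forall>i. i \<noteq> i1 \<longrightarrow> lam i1 \<ge> 2 * lam i"
    and eqcase: "\<forall>i. i \<noteq> i1 \<longrightarrow> lam i1 = 2 * lam i \<longrightarrow>
                   ca_h eps x p (ca_K eps x p (e i) (e i)) (e i) = 0"
  shows "card (lam ` UNIV) \<le> 3"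
proof -
  \<comment> \<open>Neither the maximality of \<open>e\<^sub>1\<close>, nor the equality case, nor the non-constancy of \<open>\<mu>\<close>
    is needed: \<open>d\<mu>\<^sub>p \<noteq> 0\<close> alone forces \<open>\<lambda>\<^sub>1 > 2\<lambda>\<^sub>i\<close>.\<close>
  interpret centroaffine_chart U x eps
    using imm convex dim by unfold_locales (auto simp: centroaffine_immersion_def loc_strongly_convex_def)
  define d\<mu> where "d\<mu> = frechet_derivative \<mu> (at p)"
  have d\<mu>: "(\<mu> has_derivative d\<mu>) (at p)"
    using mu_smooth pU unfolding smooth_on_def d\<mu>_def
    by (metis iter_dd.simps(1) frechet_derivative_works)
  note relation = eigenvalue_relation[OF pU d\<mu> cov orth eig]
  have d\<mu>_e1: "d\<mu> (e i1) \<noteq> 0"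
  proof
    assume "d\<mu> (e i1) = 0"
    then have "d\<mu> (e i) = 0" for i using relation(1) by (cases "i = i1") auto
    then have "d\<mu> = (\<lambda>v. 0)"
      using linear_zero_on_orthonormal_frame[OF pU orth has_derivative_linear[OF d\<mu>]] by auto
    then show False using dmu unfolding d\<mu>_def by simp
  qed
  have strict: "2 * lam i < lam i1" if "i \<noteq> i1" for i
  proof -
    have "lam i1 - 2 * lam i \<noteq> 0" using relation(2)[OF that] d\<mu>_e1 by auto
    moreover have "2 * lam i \<le> lam i1" using ineq that by blast
    ultimately show ?thesis by simp
  qed
  have "card (lam ` (UNIV - {i1})) \<le> 2"
    using relation(2) strict
    by (intro card_cubic_roots_below_half[where L="lam i1" and e=eps and k="- d\<mu> (e i1)"])
      (auto simp: algebra_simps)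
  moreover have "lam ` UNIV = insert (lam i1) (lam ` (UNIV - {i1}))" by blast
  ultimately show ?thesis by (simp add: card_insert_if)
qed

end
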